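(* (Fern Decomposition Lemma) Let $H$ be a multigraph and let $\mathcal{F}$ be the partition of $E(H)$ into the equivalence classes of $\sim$. Then each element of $H[\mathcal{F}]$ is a fern, every non-essential vertex of $H$ belongs to exactly one element of $H[\mathcal{F}]$, and $\bigcup_{S\in H[\mathcal{F}]}\partial S$ consists exactly of the essential vertices of $H$. Moreover, let the quotient multigraph $H/\mathcal{F}$ have vertex set $\bigcup_{S\in H[\mathcal{F}]}\partial S$ and contain one edge $uv$ for each tree fern $S\in H[\mathcal{F}]$ with $\partial S=\{u,v\}$, $u\neq v$, and one self-loop at $u$ for each cyclic fern $S\in H[\mathcal{F}]$ with $\partial S=\{u\}$. Then the feedback vertex number of $H/\mathcal{F}$ is at most that of $H$, and every vertex of $H/\mathcal{F}$ has degree at least 3 in $H/\mathcal{F}$.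
   Context: Multigraphs are undirected and may contain parallel edges and self-loops (a self-loop is a cycle; two parallel edges form a cycle); the feedback vertex number is the minimum number of vertices whose removal leaves an acyclic multigraph. An incidence is a pair $(u,e)$ with $e$ incident to $u$; a self-loop at $u$ gives two incidences; the degree of a vertex is its number of incidences. An edge is essential if it lies on a cycle, or is a bridge whose removal creates two new components each containing a cycle. A vertex is essential if it participates in at least three incidences with essential edges; otherwise non-essential. An incidence $(u,e)$ is critical if $u$ and $e$ are both essential. For edges $e,f$: $e\sim f$ iff there is a walk $u_0e_1u_1\dots e_\ell u_\ell$ with $e_1=e$, $e_\ell=f$, such that for every $i\in\{1,\dots,\ell-1\}$ the incidences $(u_i,e_i)$ and $(u_i,e_{i+1})$ are not critical. A boundaried multigraph is a multigraph with a distinguished vertex subset $\partial$ (boundary). For $F\subseteq E(H)$, $H[F]$ is the boundaried multigraph formed by the edges of $F$ and their endpoints, with boundary the vertices of $H[F]$ incident in $H$ to edges outside $F$. For a partition $\mathcal{F}$ of $E(H)$, $H[\mathcal{F}]=\{H[F]:F\in\mathcal{F}\}$ together with a single-vertex multigraph with empty boundary for each isolated vertex of $H$. A unicyclic graph is a connected multigraph with exactly one cycle. A fern is a boundaried multigraph $S$ with $|\partial S|\le 2$ such that: if $|\partial S|=2$, $S$ is a tree and both boundary vertices are leaves; if $|\partial S|=1$, $S$ is a tree or unicyclic, and in the unicyclic case the boundary vertex has degree 2 in $S$ and lies on its cycle; if $|\partial S|=0$, $S$ is a tree or unicyclic. A fern is a tree fern if it is a tree, and a cyclic fern if unicyclic.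 *)

theory Defs
  imports Main
begin

text \<open>A (finite, undirected) multigraph is given by a vertex set V, an edge set E and
an endpoint map ends; ends e is the set of endpoints of e, of size 1 (self-loop) or 2.\<close>

definition multigraph :: "'v set \<Rightarrow> 'e set \<Rightarrow> ('e \<Rightarrow> 'v set) \<Rightarrow> bool" where
  "multigraph V E ends \<longleftrightarrow> finite V \<and> finite E \<and>
     (\<forall>e\<in>E. ends e \<subseteq> V \<and> ends e \<noteq> {} \<and> card (ends e) \<le> 2)"

text \<open>Degree = number of incidences; a self-loop contributes two incidences.\<close>
definition degree :: "'e set \<Rightarrow> ('e \<Rightarrow> 'v set) \<Rightarrow> 'v \<Rightarrow> nat" where
  "degree E ends u = card {e\<in>E. u \<in> ends e} + card {e\<in>E. ends e = {u}}"

text \<open>A cycle: edges e_0..e_(l-1) (distinct), vertices v_0..v_(l-1) (distinct), l \<ge> 1,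
 with ends e_i = {v_i, v_(i+1 mod l)}. l = 1: self-loop; l = 2: two parallel edges.\<close>
definition is_cycle :: "'e set \<Rightarrow> ('e \<Rightarrow> 'v set) \<Rightarrow> 'e list \<Rightarrow> 'v list \<Rightarrow> bool" where
  "is_cycle E ends es vs \<longleftrightarrow> es \<noteq> [] \<and> length vs = length es \<and> distinct es \<and> distinct vs \<and>
     set es \<subseteq> E \<and>
     (\<forall>i<length es. ends (es ! i) = {vs ! i, vs ! ((i + 1) mod length es)})"

definition acyclic_mg :: "'e set \<Rightarrow> ('e \<Rightarrow> 'v set) \<Rightarrow> bool" where
  "acyclic_mg E ends \<longleftrightarrow> \<not> (\<exists>es vs. is_cycle E ends es vs)"

text \<open>Edge sets of cycles (a cycle, as a subgraph, is determined by its edge set).\<close>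
definition cycle_edge_sets :: "'e set \<Rightarrow> ('e \<Rightarrow> 'v set) \<Rightarrow> 'e set set" where
  "cycle_edge_sets E ends = {set es | es vs. is_cycle E ends es vs}"

definition reach :: "'e set \<Rightarrow> ('e \<Rightarrow> 'v set) \<Rightarrow> 'v \<Rightarrow> 'v \<Rightarrow> bool" where
  "reach E ends = (\<lambda>x y. \<exists>e\<in>E. ends e = {x, y})\<^sup>*\<^sup>*"

definition connected_mg :: "'v set \<Rightarrow> 'e set \<Rightarrow> ('e \<Rightarrow> 'v set) \<Rightarrow> bool" where
  "connected_mg V E ends \<longleftrightarrow> V \<noteq> {} \<and> (\<forall>x\<in>V. \<forall>y\<in>V. reach E ends x y)"

definition fvn :: "'v set \<Rightarrow> 'e set \<Rightarrow> ('e \<Rightarrow> 'v set) \<Rightarrow> nat" where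
  "fvn V E ends = Min (card ` {X. X \<subseteq> V \<and> acyclic_mg {e\<in>E. ends e \<inter> X = {}} ends})"

definition essential_edge :: "'e set \<Rightarrow> ('e \<Rightarrow> 'v set) \<Rightarrow> 'e \<Rightarrow> bool" where
  "essential_edge E ends e \<longleftrightarrow> e \<in> E \<and>
     ((\<exists>es vs. is_cycle E ends es vs \<and> e \<in> set es) \<or>
      (\<exists>u v. u \<noteq> v \<and> ends e = {u, v} \<and> \<not> reach (E - {e}) ends u v \<and>
         (\<exists>es vs. is_cycle (E - {e}) ends es vs \<and> reach (E - {e}) ends u (hd vs)) \<and>
         (\<exists>es vs. is_cycle (E - {e}) ends es vs \<and> reach (E - {e}) ends v (hd vs))))"

definition essential_vertex :: "'v set \<Rightarrow> 'e set \<Rightarrow> ('e \<Rightarrow> 'v set) \<Rightarrow> 'v \<Rightarrow> bool" where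
  "essential_vertex V E ends u \<longleftrightarrow> u \<in> V \<and>
     card {e\<in>E. essential_edge E ends e \<and> u \<in> ends e}
     + card {e\<in>E. essential_edge E ends e \<and> ends e = {u}} \<ge> 3"

definition critical :: "'v set \<Rightarrow> 'e set \<Rightarrow> ('e \<Rightarrow> 'v set) \<Rightarrow> 'v \<Rightarrow> 'e \<Rightarrow> bool" where
  "critical V E ends u e \<longleftrightarrow> u \<in> ends e \<and> essential_vertex V E ends u \<and> essential_edge E ends e"

definition fern_sim :: "'v set \<Rightarrow> 'e set \<Rightarrow> ('e \<Rightarrow> 'v set) \<Rightarrow> 'e \<Rightarrow> 'e \<Rightarrow> bool" where
  "fern_sim V E ends e f \<longleftrightarrow> (\<exists>es vs. es \<noteq> [] \<and> length vs = length es + 1 \<and> set es \<subseteq> E \<and>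
     hd es = e \<and> last es = f \<and>
     (\<forall>i<length es. ends (es ! i) = {vs ! i, vs ! Suc i}) \<and>
     (\<forall>i. 0 < i \<and> i < length es \<longrightarrow>
        \<not> critical V E ends (vs ! i) (es ! (i - 1)) \<and> \<not> critical V E ends (vs ! i) (es ! i)))"

definition sim_classes :: "'v set \<Rightarrow> 'e set \<Rightarrow> ('e \<Rightarrow> 'v set) \<Rightarrow> 'e set set" where
  "sim_classes V E ends = (\<lambda>e. {f\<in>E. fern_sim V E ends e f}) ` E"

text \<open>Boundaried multigraphs: (vertices, edges, boundary), endpoints inherited from ends.\<close>
type_synonym ('v, 'e) bmg = "'v set \<times> 'e set \<times> 'v set"

definition bverts :: "('v, 'e) bmg \<Rightarrow> 'v set" where "bverts S = fst S"
definition bedges :: "('v, 'e) bmg \<Rightarrow> 'e set" where "bedges S = fst (snd S)"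
definition bdry :: "('v, 'e) bmg \<Rightarrow> 'v set" where "bdry S = snd (snd S)"

definition induced_bmg :: "'e set \<Rightarrow> ('e \<Rightarrow> 'v set) \<Rightarrow> 'e set \<Rightarrow> ('v, 'e) bmg" where
  "induced_bmg E ends F = (\<Union>(ends ` F), F, {v \<in> \<Union>(ends ` F). \<exists>e\<in>E - F. v \<in> ends e})"

definition induced_partition :: "'v set \<Rightarrow> 'e set \<Rightarrow> ('e \<Rightarrow> 'v set) \<Rightarrow> 'e set set \<Rightarrow> ('v, 'e) bmg set" where
  "induced_partition V E ends \<F> = induced_bmg E ends ` \<F> \<union>
     {({v}, {}, {}) | v. v \<in> V \<and> (\<forall>e\<in>E. v \<notin> ends e)}"

definition is_tree :: "('e \<Rightarrow> 'v set) \<Rightarrow> ('v, 'e) bmg \<Rightarrow> bool" where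
  "is_tree ends S \<longleftrightarrow> connected_mg (bverts S) (bedges S) ends \<and> acyclic_mg (bedges S) ends"

definition is_unicyclic :: "('e \<Rightarrow> 'v set) \<Rightarrow> ('v, 'e) bmg \<Rightarrow> bool" where
  "is_unicyclic ends S \<longleftrightarrow> connected_mg (bverts S) (bedges S) ends \<and>
     card (cycle_edge_sets (bedges S) ends) = 1"

definition is_fern :: "('e \<Rightarrow> 'v set) \<Rightarrow> ('v, 'e) bmg \<Rightarrow> bool" where
  "is_fern ends S \<longleftrightarrow> card (bdry S) \<le> 2 \<and>
     (card (bdry S) = 2 \<longrightarrow> is_tree ends S \<and> (\<forall>b\<in>bdry S. degree (bedges S) ends b = 1)) \<and>
     (card (bdry S) = 1 \<longrightarrow> is_tree ends S \<or>
        (is_unicyclic ends S \<and> (\<forall>b\<in>bdry S. degree (bedges S) ends b = 2 \<and>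
           (\<exists>es vs. is_cycle (bedges S) ends es vs \<and> b \<in> set vs)))) \<and>
     (card (bdry S) = 0 \<longrightarrow> is_tree ends S \<or> is_unicyclic ends S)"

text \<open>Quotient multigraph H/\<F>: edges are the elements S of H[\<F>] that are tree ferns with two
boundary vertices or cyclic ferns with one boundary vertex; the endpoints of S are \<partial>S.\<close>
definition quot_verts :: "('v, 'e) bmg set \<Rightarrow> 'v set" where
  "quot_verts HF = \<Union>(bdry ` HF)"

definition quot_edges :: "('e \<Rightarrow> 'v set) \<Rightarrow> ('v, 'e) bmg set \<Rightarrow> ('v, 'e) bmg set" where
  "quot_edges ends HF = {S \<in> HF. (is_fern ends S \<and> is_tree ends S \<and> card (bdry S) = 2) \<or>
                                   (is_fern ends S \<and> is_unicyclic ends S \<and> card (bdry S) = 1)}"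

end

theory Submission
  imports Defs
begin

text \<open>
  Call a vertex touched if it is an end of an essential edge. Two distinct touched vertices are
  never joined by a path of non-essential edges: its first edge of such a path would be a bridge with a
  cycle on each side, hence essential. An end of an essential non-loop edge carries a second
  essential edge, so a touched non-essential vertex has exactly two essential incidences. Hence
  the essential edges of a class of \<open>\<sim>\<close> form a chain through non-essential vertices, attached
  to essential vertices by at most two critical incidences (count degrees after splitting the
  essential vertices), and the other edges of the class are trees hanging off the chain. So a
  class is a pendant tree, a path between two essential vertices, or a cycle through at most one
  essential vertex: a fern whose boundary consists of its essential vertices.

  Summing over the classes, the degree of an essential vertex in \<open>H/\<F>\<close> is its number of
  essential incidences, at least 3. Replacing every vertex of a minimum feedback vertex set of
  \<open>H\<close> by an essential vertex of its class gives a feedback vertex set of \<open>H/\<F>\<close>: a cycle of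
  \<open>H/\<F>\<close> avoiding it consists of ferns avoiding the original set, and lifts to a cycle of \<open>H\<close>.
\<close>

section \<open>Reachability, paths and cycles\<close>

lemma reach_refl [simp]: "reach F ends x x"
  by (simp add: reach_def)

lemma reach_edge: "e \<in> F \<Longrightarrow> ends e = {x, y} \<Longrightarrow> reach F ends x y"
  unfolding reach_def by (rule r_into_rtranclp) auto

lemma reach_trans: "reach F ends x y \<Longrightarrow> reach F ends y z \<Longrightarrow> reach F ends x z"
  unfolding reach_def by (rule rtranclp_trans)

lemma reach_sym: "reach F ends x y \<Longrightarrow> reach F ends y x"
  unfolding reach_def
proof (induction rule: rtranclp_induct)
  case (step y z)
  then obtain e where "e \<in> F" "ends e = {y, z}" by auto
  then have "(\<lambda>x y. \<exists>e\<in>F. ends e = {x, y})\<^sup>*\<^sup>* z y"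
    by (intro r_into_rtranclp) (auto simp: insert_commute)
  with step show ?case by (meson rtranclp_trans)
qed simp

lemma reach_mono: "reach F ends x y \<Longrightarrow> F \<subseteq> G \<Longrightarrow> reach G ends x y"
  unfolding reach_def by (erule rtranclp_mono[THEN predicate2D, rotated]) auto

lemma reach_edge_ends:
  "e \<in> F \<Longrightarrow> ends e = {u, v} \<Longrightarrow> x \<in> ends e \<Longrightarrow> y \<in> ends e \<Longrightarrow> reach F ends x y"
  by (auto intro: reach_edge reach_sym)

lemma card_le_2_doubleton:
  assumes "finite A" "A \<noteq> {}" "card A \<le> 2"
  obtains u v where "A = {u, v}"
proof -
  have "card A \<noteq> 0" using assms(1,2) by simp
  then have "card A = 1 \<or> card A = 2" using assms(3) by linarith
  then show thesis
  proof
    assume "card A = 1"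
    then show thesis using that by (auto simp: card_1_singleton_iff)
  next
    assume "card A = 2"
    then show thesis using that by (auto simp: card_2_iff)
  qed
qed

lemma reach_avoiding_edge:
  assumes "reach F ends q y" "\<not> reach F ends q a" "g \<in> F" "a \<in> ends g" "ends g = {u, v}"
  shows "reach (F - {g}) ends q y"
  using assms(1) unfolding reach_def
proof (induction rule: rtranclp_induct)
  case (step x z)
  then obtain e where e: "e \<in> F" "ends e = {x, z}" by auto
  show ?case
  proof (cases "e = g")
    case True
    then have "reach F ends x a" using reach_edge_ends[of g F ends u v x a] assms(3-5) e by auto
    with step(1) assms(2) show ?thesis unfolding reach_def by (meson rtranclp_trans)
  next
    case False
    then have "reach (F - {g}) ends x z" using e by (intro reach_edge) auto
    with step.IH show ?thesis unfolding reach_def by (rule rtranclp_trans)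
  qed
qed simp

lemma reach_Diff_pendant_edge:
  assumes "reach F ends a b" "a \<noteq> u" "b \<noteq> u" "\<forall>f\<in>F. u \<in> ends f \<longrightarrow> f = g"
    "ends g = {u, y}" "y \<noteq> u"
  shows "reach (F - {g}) ends a b"
proof -
  have "(x \<noteq> u \<and> reach (F - {g}) ends a x) \<or> (x = u \<and> reach (F - {g}) ends a y)"
    if "reach F ends a x" for x
    using that unfolding reach_def
  proof (induction rule: rtranclp_induct)
    case base then show ?case using assms(2) by (simp add: reach_def)
  next
    case (step x z)
    then obtain e where e: "e \<in> F" "ends e = {x, z}" by auto
    show ?case
    proof (cases "e = g")
      case True
      then have "{x, z} = {u, y}" using e assms(5) by simp
      then show ?thesis using step assms(6) by (auto simp: reach_def doubleton_eq_iff)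
    next
      case False
      then have "x \<noteq> u" "z \<noteq> u" using e assms(4) by auto
      moreover have "reach (F - {g}) ends x z" using e False by (intro reach_edge) auto
      ultimately show ?thesis using step by (auto simp: reach_def intro: rtranclp_trans)
    qed
  qed
  from this[OF assms(1)] assms(3) show ?thesis by auto
qed

lemma is_cycle_edges_subset: "is_cycle F ends es vs \<Longrightarrow> set es \<subseteq> F"
  by (simp add: is_cycle_def)

lemma is_cycle_mono: "is_cycle F ends es vs \<Longrightarrow> set es \<subseteq> G \<Longrightarrow> is_cycle G ends es vs"
  by (simp add: is_cycle_def)

lemma is_cycle_ends_subset:
  assumes c: "is_cycle F ends es vs" and "f \<in> set es"
  shows "ends f \<subseteq> set vs"
proof -
  obtain i where i: "i < length es" "f = es ! i" using assms(2) by (metis in_set_conv_nth)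
  then have "ends f = {vs ! i, vs ! ((i + 1) mod length es)}" using c by (simp add: is_cycle_def)
  moreover have "(i + 1) mod length es < length vs" using c i by (simp add: is_cycle_def)
  ultimately show ?thesis using c i by (auto simp: is_cycle_def)
qed

lemma is_cycle_vertex_edge:
  assumes c: "is_cycle F ends es vs" and "x \<in> set vs"
  shows "\<exists>e\<in>set es. x \<in> ends e"
proof -
  obtain i where "i < length vs" "x = vs ! i" using assms(2) by (metis in_set_conv_nth)
  then have "i < length es" "x \<in> ends (es ! i)" using c by (auto simp: is_cycle_def)
  then show ?thesis by auto
qed

lemma is_cycle_hd: "is_cycle F ends es vs \<Longrightarrow> hd vs \<in> set vs"
  by (metis is_cycle_def hd_in_set length_0_conv)

lemma is_cycle_reach:
  assumes c: "is_cycle F ends es vs" and "x \<in> set vs" "y \<in> set vs"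
  shows "reach (set es) ends x y"
proof -
  have "reach (set es) ends (vs ! 0) (vs ! i)" if "i < length vs" for i
    using that
  proof (induction i)
    case (Suc i)
    then have "i < length es" "Suc i < length es" using c by (auto simp: is_cycle_def)
    then have "reach (set es) ends (vs ! i) (vs ! Suc i)"
      using c by (intro reach_edge[of "es ! i"]) (auto simp: is_cycle_def)
    with Suc show ?case by (meson Suc_lessD reach_trans)
  qed simp
  then show ?thesis using assms(2,3) by (metis in_set_conv_nth reach_sym reach_trans)
qed

lemma is_cycle_incident_edges_ge_2:
  assumes c: "is_cycle F ends es vs" "x \<in> set vs" "length es \<noteq> 1"
  shows "card {e\<in>set es. x \<in> ends e} \<ge> 2"
proof -
  obtain i where i: "i < length vs" "x = vs ! i" using c by (metis in_set_conv_nth)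
  define k where "k = length es"
  have k: "k = length vs" "k > 0" using c by (auto simp: is_cycle_def k_def)
  define j where "j = (if i = 0 then k - 1 else i - 1)"
  have j: "j < k" "(j + 1) mod k = i" "j \<noteq> i"
    using k i c(3) unfolding j_def k_def by auto
  then have ne: "es ! j \<noteq> es ! i"
    using c i k by (auto simp: is_cycle_def nth_eq_iff_index_eq k_def)
  have "x \<in> ends (es ! i)" "x \<in> ends (es ! j)" using c i j k by (auto simp: is_cycle_def k_def)
  then have "{es ! i, es ! j} \<subseteq> {e\<in>set es. x \<in> ends e}" using i j k by (auto simp: k_def)
  then have "card {es ! i, es ! j} \<le> card {e\<in>set es. x \<in> ends e}" by (intro card_mono) auto
  then show ?thesis using ne by simp
qed

lemma is_cycle_adjacent_distinct:
  assumes c: "is_cycle F ends es vs" and k: "2 \<le> length es" and i: "i < length es"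
  shows "vs ! i \<noteq> vs ! ((i + 1) mod length es)"
proof -
  have ne: "(i + 1) mod length es \<noteq> i"
  proof (cases "i + 1 < length es")
    case False
    then have "i + 1 = length es" using i by simp
    then show ?thesis using k by simp
  qed simp
  have "0 < length es" using i by linarith
  then have "(i + 1) mod length es < length es" by (rule mod_less_divisor)
  then show ?thesis using c i ne by (simp add: is_cycle_def nth_eq_iff_index_eq)
qed

lemma degree_mono: "F \<subseteq> G \<Longrightarrow> finite G \<Longrightarrow> degree F ends x \<le> degree G ends x"
  unfolding degree_def by (intro add_mono card_mono) (auto intro: finite_subset)

lemma is_cycle_degree_ge_2:
  assumes c: "is_cycle F ends es vs" "x \<in> set vs"
  shows "degree (set es) ends x \<ge> 2"
proof (cases "length es = 1")
  case True
  then obtain f where "es = [f]" by (cases es) auto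
  moreover have "length vs = 1" using c True by (simp add: is_cycle_def)
  ultimately have "ends f = {x}" using c by (auto simp: is_cycle_def in_set_conv_nth)
  then have "{e\<in>set es. x \<in> ends e} = {f}" "{e\<in>set es. ends e = {x}} = {f}"
    using \<open>es = [f]\<close> by auto
  then show ?thesis by (simp add: degree_def)
next
  case False
  then show ?thesis using is_cycle_incident_edges_ge_2[OF c] by (simp add: degree_def)
qed

definition simple_path :: "('e \<Rightarrow> 'v set) \<Rightarrow> 'e set \<Rightarrow> 'e list \<Rightarrow> 'v list \<Rightarrow> bool" where
  "simple_path ends F es vs \<longleftrightarrow> length vs = Suc (length es) \<and> distinct vs \<and> set es \<subseteq> F \<and>
     (\<forall>i<length es. ends (es ! i) = {vs ! i, vs ! Suc i})"

lemma simple_path_distinct_edges: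
  assumes p: "simple_path ends F es vs"
  shows "distinct es"
  unfolding distinct_conv_nth
proof (intro allI impI)
  fix i j assume ij: "i < length es" "j < length es" "i \<noteq> j"
  show "es ! i \<noteq> es ! j"
  proof
    assume "es ! i = es ! j"
    then have "{vs ! i, vs ! Suc i} = {vs ! j, vs ! Suc j}" using p ij by (metis simple_path_def)
    moreover have "vs ! i \<noteq> vs ! j" "vs ! i \<noteq> vs ! Suc j \<or> vs ! Suc i \<noteq> vs ! j"
      using p ij by (auto simp: simple_path_def nth_eq_iff_index_eq)
    ultimately show False by (auto simp: doubleton_eq_iff)
  qed
qed

lemma simple_path_snoc:
  assumes p: "simple_path ends F es vs" and "z \<notin> set vs" "g \<in> F" "ends g = {last vs, z}"
  shows "simple_path ends F (es @ [g]) (vs @ [z])"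
proof -
  have "vs \<noteq> []" using p by (auto simp: simple_path_def)
  then have "vs ! length es = last vs" using p by (simp add: simple_path_def last_conv_nth)
  then show ?thesis
    using assms by (auto simp: simple_path_def nth_append less_Suc_eq)
qed

lemma reach_imp_simple_path:
  "reach F ends a b \<Longrightarrow> \<exists>es vs. simple_path ends F es vs \<and> hd vs = a \<and> last vs = b"
  unfolding reach_def
proof (induction rule: rtranclp_induct)
  case base
  show ?case by (intro exI[of _ "[]"] exI[of _ "[a]"]) (auto simp: simple_path_def)
next
  case (step x z)
  then obtain es vs where p: "simple_path ends F es vs" "hd vs = a" "last vs = x" by auto
  obtain g where g: "g \<in> F" "ends g = {x, z}" using step by auto
  show ?case
  proof (cases "z \<in> set vs")
    case True
    then obtain j where j: "j < length vs" "vs ! j = z" by (metis in_set_conv_nth)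
    have "simple_path ends F (take j es) (take (Suc j) vs)"
      using p j by (auto simp: simple_path_def dest: in_set_takeD)
    moreover have "hd (take (Suc j) vs) = a" using p j by (metis hd_take zero_less_Suc)
    moreover have "last (take (Suc j) vs) = z" using j by (simp add: take_Suc_conv_app_nth)
    ultimately show ?thesis by blast
  next
    case False
    have "vs \<noteq> []" using p by (auto simp: simple_path_def)
    then show ?thesis using simple_path_snoc[OF p(1) False g(1)] p g by (metis hd_append last_snoc)
  qed
qed

lemma simple_path_drop:
  "simple_path ends F es vs \<Longrightarrow> i \<le> length es \<Longrightarrow> simple_path ends F (drop i es) (drop i vs)"
  by (auto simp: simple_path_def add.commute dest: in_set_dropD)

lemma simple_path_reach:
  assumes p: "simple_path ends F es vs"
  shows "reach (set es) ends (hd vs) (last vs)"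
proof -
  have "reach (set es) ends (vs ! 0) (vs ! j)" if "j < length vs" for j
    using that
  proof (induction j)
    case (Suc j)
    then have "j < length es" using p by (simp add: simple_path_def)
    then have "reach (set es) ends (vs ! j) (vs ! Suc j)"
      using p by (intro reach_edge[of "es ! j"]) (auto simp: simple_path_def)
    with Suc show ?case by (meson Suc_lessD reach_trans)
  qed simp
  moreover have "vs \<noteq> []" using p by (auto simp: simple_path_def)
  ultimately show ?thesis by (simp add: hd_conv_nth last_conv_nth)
qed

lemma simple_path_close_cycle:
  assumes p: "simple_path ends F es vs" and "e \<in> F" "e \<notin> set es" "ends e = {last vs, hd vs}"
  shows "is_cycle F ends (es @ [e]) vs"
  unfolding is_cycle_def
proof (intro conjI allI impI)
  have ne: "vs \<noteq> []" using p by (auto simp: simple_path_def)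
  show "distinct (es @ [e])" using simple_path_distinct_edges[OF p] assms(3) by simp
  fix i assume i: "i < length (es @ [e])"
  show "ends ((es @ [e]) ! i) = {vs ! i, vs ! ((i + 1) mod length (es @ [e]))}"
  proof (cases "i < length es")
    case True then show ?thesis using p by (simp add: simple_path_def nth_append)
  next
    case False
    then have "i = length es" using i by simp
    moreover have "vs ! length es = last vs" using p ne by (simp add: simple_path_def last_conv_nth)
    ultimately show ?thesis using assms(4) ne by (simp add: nth_append hd_conv_nth insert_commute)
  qed
qed (use assms in \<open>auto simp: simple_path_def\<close>)

lemma reach_Diff_imp_cycle:
  assumes "e \<in> F" "ends e = {a, b}" "reach (F - {e}) ends a b"
  shows "\<exists>es vs. is_cycle F ends es vs \<and> e \<in> set es"
proof -
  obtain es vs where p: "simple_path ends (F - {e}) es vs" "hd vs = a" "last vs = b"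
    using reach_imp_simple_path[OF assms(3)] by blast
  then have "simple_path ends F es vs" "e \<notin> set es" by (auto simp: simple_path_def)
  then have "is_cycle F ends (es @ [e]) vs"
    using simple_path_close_cycle assms p by (metis insert_commute)
  then show ?thesis by auto
qed

lemma simple_path_first_edge:
  assumes p: "simple_path ends F es vs" "hd vs = x" "last vs = y" "x \<noteq> y"
  shows "es \<noteq> [] \<and> ends (es ! 0) = {x, vs ! 1} \<and> x \<noteq> vs ! 1 \<and> es ! 0 \<in> F"
proof -
  have lv: "length vs = Suc (length es)" "distinct vs" using p by (auto simp: simple_path_def)
  have ne: "es \<noteq> []" using lv p by (cases vs) auto
  then have "ends (es ! 0) = {vs ! 0, vs ! 1}" "es ! 0 \<in> F" using p by (auto simp: simple_path_def)
  moreover have "vs ! 0 = x" using p lv by (cases vs) auto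
  moreover have "vs ! 0 \<noteq> vs ! 1" using lv ne by (simp add: nth_eq_iff_index_eq)
  ultimately show ?thesis using ne by auto
qed

lemma simple_path_tail_reach:
  assumes p: "simple_path ends F es vs" "es \<noteq> []"
  shows "reach (F - {es ! 0}) ends (vs ! 1) (last vs)"
proof -
  have p1: "simple_path ends F (drop 1 es) (drop 1 vs)"
    using p by (intro simple_path_drop) (auto simp: Suc_le_eq)
  have l1: "1 < length vs" using p by (cases es) (auto simp: simple_path_def)
  have "es = es ! 0 # drop 1 es" using p(2) by (cases es) auto
  then have "es ! 0 \<notin> set (drop 1 es)" using simple_path_distinct_edges[OF p(1)] by (metis distinct.simps(2))
  moreover have "set (drop 1 es) \<subseteq> F" using p1 by (simp add: simple_path_def)
  ultimately have "set (drop 1 es) \<subseteq> F - {es ! 0}" by auto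
  moreover have "hd (drop 1 vs) = vs ! 1" "last (drop 1 vs) = last vs"
    using l1 by (simp_all add: hd_drop_conv_nth last_drop)
  ultimately show ?thesis using simple_path_reach[OF p1] by (metis reach_mono)
qed

section \<open>Counting incidences\<close>

lemma card_filter_eq_sum: "finite F \<Longrightarrow> card {e\<in>F. P e} = (\<Sum>e\<in>F. if P e then 1 else 0)"
  by (simp add: sum.If_cases Int_def)

lemma degree_eq_sum:
  "finite F \<Longrightarrow> degree F ends w =
     (\<Sum>e\<in>F. (if w \<in> ends e then 1 else 0) + (if ends e = {w} then 1 else 0))"
  unfolding degree_def sum.distrib by (simp only: card_filter_eq_sum)

lemma handshake:
  assumes fin: "finite F" "finite W" and sub: "\<forall>e\<in>F. ends e \<subseteq> W \<and> (\<exists>u v. ends e = {u, v})"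
  shows "(\<Sum>w\<in>W. degree F ends w) = 2 * card F"
proof -
  have each: "(\<Sum>w\<in>W. (if w \<in> ends e then 1 else 0) + (if ends e = {w} then 1 else 0)) = (2::nat)"
    if "e \<in> F" for e
  proof -
    have "ends e \<subseteq> W" "\<exists>u v. ends e = {u, v}" using sub that by simp_all
    then obtain u v where uv: "ends e = {u, v}" "u \<in> W" "v \<in> W" by auto
    have s1: "(\<Sum>w\<in>W. (if w \<in> ends e then 1 else 0)) = card {w\<in>W. w \<in> ends e}"
      and s2: "(\<Sum>w\<in>W. (if ends e = {w} then 1 else 0)) = card {w\<in>W. ends e = {w}}"
      using fin by (simp_all only: card_filter_eq_sum)
    have c1: "{w\<in>W. w \<in> ends e} = {u, v}" using uv by auto
    show ?thesis
    proof (cases "u = v")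
      case True
      then have "{w\<in>W. ends e = {w}} = {u}" using uv by auto
      then show ?thesis using s1 s2 c1 True by (simp add: sum.distrib)
    next
      case False
      then have "{w\<in>W. ends e = {w}} = {}" using uv by (auto simp: doubleton_eq_iff)
      then show ?thesis using s1 s2 c1 False by (simp add: sum.distrib)
    qed
  qed
  have "(\<Sum>w\<in>W. degree F ends w) =
     (\<Sum>w\<in>W. \<Sum>e\<in>F. (if w \<in> ends e then 1 else 0) + (if ends e = {w} then 1 else 0))"
    using fin by (simp add: degree_eq_sum)
  also have "\<dots> = (\<Sum>e\<in>F. \<Sum>w\<in>W. (if w \<in> ends e then 1 else 0) + (if ends e = {w} then 1 else 0))"
    by (rule sum.swap)
  also have "\<dots> = (\<Sum>e\<in>F. 2)" using each by (intro sum.cong) auto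
  finally show ?thesis by simp
qed

text \<open>The parent edges of a breadth-first search from \<open>r\<close>.\<close>

lemma connected_parent_edges:
  fixes ends :: "'e \<Rightarrow> 'v set"
  assumes conn: "\<forall>w\<in>W. reach F ends r w"
  obtains parent :: "'v \<Rightarrow> 'e" and dist :: "'v \<Rightarrow> nat"
  where "\<And>w. w \<in> W \<Longrightarrow> w \<noteq> r \<Longrightarrow> parent w \<in> F \<and> (\<exists>u. ends (parent w) = {u, w} \<and> dist u < dist w)"
proof -
  define adj where "adj = (\<lambda>x y. \<exists>e\<in>F. ends e = {x, y})"
  define dist where "dist w = (LEAST n. (adj ^^ n) r w)" for w
  have reachable: "\<exists>n. (adj ^^ n) r w" if "w \<in> W" for w
    using conn that unfolding reach_def adj_def by (simp add: rtranclp_power)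
  have dist: "(adj ^^ dist w) r w" if "w \<in> W" for w
    unfolding dist_def by (rule LeastI_ex) (rule reachable[OF that])
  have dist_le: "dist w \<le> n" if "(adj ^^ n) r w" for w n
    unfolding dist_def using that by (rule Least_le)
  have parent_ex: "\<exists>e. e \<in> F \<and> (\<exists>u. ends e = {u, w} \<and> dist u < dist w)" if "w \<in> W" "w \<noteq> r" for w
  proof -
    have "dist w \<noteq> 0" using dist[OF that(1)] that(2) by (metis relpowp.simps(1) eq_OO)
    then obtain m where m: "dist w = Suc m" by (cases "dist w") auto
    then have "(adj ^^ m OO adj) r w" using dist[OF that(1)] by simp
    then obtain u where u: "(adj ^^ m) r u" "adj u w" by blast
    have "dist u < dist w" using dist_le[OF u(1)] m by simp
    then show ?thesis using u(2) unfolding adj_def by blast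
  qed
  define parent where "parent w = (SOME e. e \<in> F \<and> (\<exists>u. ends e = {u, w} \<and> dist u < dist w))" for w
  have "parent w \<in> F \<and> (\<exists>u. ends (parent w) = {u, w} \<and> dist u < dist w)"
    if "w \<in> W" "w \<noteq> r" for w
    unfolding parent_def using parent_ex[OF that] by (rule someI_ex)
  then show thesis by (rule that)
qed

lemma connected_spanning_edges:
  fixes ends :: "'e \<Rightarrow> 'v set"
  assumes fin: "finite F" "finite W" and sub: "\<forall>e\<in>F. ends e \<subseteq> W \<and> (\<exists>u v. ends e = {u, v})"
    and r: "r \<in> W" and conn: "\<forall>w\<in>W. reach F ends r w"
  obtains P where "P \<subseteq> F" "card P + 1 = card W" "\<forall>w\<in>W. reach P ends r w"
proof -
  obtain parent :: "'v \<Rightarrow> 'e" and dist :: "'v \<Rightarrow> nat" where parent: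
    "\<And>w. w \<in> W \<Longrightarrow> w \<noteq> r \<Longrightarrow> parent w \<in> F \<and> (\<exists>u. ends (parent w) = {u, w} \<and> dist u < dist w)"
    using connected_parent_edges[OF conn] by blast
  define P where "P = parent ` (W - {r})"
  have "inj_on parent (W - {r})"
  proof (rule inj_onI)
    fix w1 w2 assume a: "w1 \<in> W - {r}" "w2 \<in> W - {r}" "parent w1 = parent w2"
    obtain u1 where u1: "ends (parent w1) = {u1, w1}" "dist u1 < dist w1" using parent a by blast
    obtain u2 where u2: "ends (parent w2) = {u2, w2}" "dist u2 < dist w2" using parent a by blast
    have "{u1, w1} = {u2, w2}" using u1 u2 a by simp
    then show "w1 = w2" using u1 u2 by (auto simp: doubleton_eq_iff)
  qed
  then have "card P = card (W - {r})" by (simp add: P_def card_image)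
  also have "card (W - {r}) + 1 = card W" using fin r by (metis Suc_eq_plus1 card_Suc_Diff1)
  finally have "card P + 1 = card W" .
  moreover have "P \<subseteq> F" using parent by (auto simp: P_def)
  moreover have "\<forall>w\<in>W. dist w = n \<longrightarrow> reach P ends r w" for n
  proof (induction n rule: less_induct)
    case (less n)
    show ?case
    proof (intro ballI impI)
      fix w assume w: "w \<in> W" "dist w = n"
      show "reach P ends r w"
      proof (cases "w = r")
        case False
        obtain u where u: "ends (parent w) = {u, w}" "dist u < dist w" using parent w False by blast
        have pw: "parent w \<in> P" using w False by (auto simp: P_def)
        have "parent w \<in> F" using parent w False by blast
        then have "u \<in> W" using sub u by auto
        then have "reach P ends r u" using less u w by auto
        moreover have "reach P ends u w" using pw u by (intro reach_edge)
        ultimately show ?thesis by (rule reach_trans)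
      qed simp
    qed
  qed
  ultimately show thesis using that by blast
qed

lemma connected_card_vertices:
  assumes fin: "finite F" "finite W" and sub: "\<forall>e\<in>F. ends e \<subseteq> W \<and> (\<exists>u v. ends e = {u, v})"
    and r: "r \<in> W" and conn: "\<forall>w\<in>W. reach F ends r w"
  shows "card W \<le> card F + 1" and "card W \<le> card F \<Longrightarrow> \<exists>es vs. is_cycle F ends es vs"
proof -
  obtain P where P: "P \<subseteq> F" "card P + 1 = card W" "\<forall>w\<in>W. reach P ends r w"
    using connected_spanning_edges[OF assms] .
  have "card P \<le> card F" using fin(1) P(1) by (rule card_mono)
  then show "card W \<le> card F + 1" using P(2) by simp
  assume "card W \<le> card F"
  then have "P \<noteq> F" using P(2) by auto
  then obtain g where g: "g \<in> F" "g \<notin> P" using P(1) by blast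
  have "ends g \<subseteq> W" "\<exists>u v. ends g = {u, v}" using sub g(1) by simp_all
  then obtain a b where ab: "ends g = {a, b}" "a \<in> W" "b \<in> W" by auto
  have "reach P ends r a" "reach P ends r b" using P(3) ab(2,3) by simp_all
  then have "reach P ends a b" by (metis reach_sym reach_trans)
  moreover have "P \<subseteq> F - {g}" using P(1) g(2) by blast
  ultimately have "reach (F - {g}) ends a b" by (rule reach_mono)
  then show "\<exists>es vs. is_cycle F ends es vs" using reach_Diff_imp_cycle[of g F ends a b] g(1) ab(1) by blast
qed

lemma connected_max_degree_2:
  assumes fin: "finite F" "finite W" and sub: "\<forall>e\<in>F. ends e \<subseteq> W \<and> (\<exists>u v. ends e = {u, v})"
    and r: "r \<in> W" and conn: "\<forall>w\<in>W. reach F ends r w"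
    and deg: "\<forall>w\<in>W. degree F ends w = 1 \<or> degree F ends w = 2"
  defines "L \<equiv> {w\<in>W. degree F ends w = 1}"
  shows "card L \<le> 2" "even (card L)" "L = {} \<Longrightarrow> \<exists>es vs. is_cycle F ends es vs"
proof -
  have finL: "finite L" "L \<subseteq> W" using fin(2) by (auto simp: L_def)
  have "(\<Sum>w\<in>W. degree F ends w) = (\<Sum>w\<in>L. degree F ends w) + (\<Sum>w\<in>W - L. degree F ends w)"
    using sum.subset_diff[OF finL(2) fin(2)] by (simp only: add.commute)
  also have "(\<Sum>w\<in>L. degree F ends w) = (\<Sum>w\<in>L. 1)" by (intro sum.cong) (auto simp: L_def)
  also have "(\<Sum>w\<in>W - L. degree F ends w) = (\<Sum>w\<in>W - L. 2)"
    using deg by (intro sum.cong) (auto simp: L_def)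
  finally have hs: "2 * card F = card L + 2 * card (W - L)"
    unfolding handshake[OF fin sub] by simp
  have cW: "card W = card L + card (W - L)"
    using finL fin(2) by (simp add: card_Diff_subset card_mono)
  have "card W \<le> card F + 1" using connected_card_vertices(1)[OF fin sub r conn] .
  with hs cW show "card L \<le> 2" by linarith
  have "even (card L + 2 * card (W - L))" using hs by (metis dvd_triv_left)
  then show "even (card L)" by simp
  assume "L = {}"
  then have "card L = 0" by simp
  then have "card W \<le> card F" using hs cW by linarith
  then show "\<exists>es vs. is_cycle F ends es vs" using connected_card_vertices(2)[OF fin sub r conn] by simp
qed

lemma fvn_le_card:
  assumes "finite W" "X \<subseteq> W" "acyclic_mg {e\<in>F. ends e \<inter> X = {}} ends"
  shows "fvn W F ends \<le> card X"
  unfolding fvn_def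
proof (rule Min_le)
  have "{X. X \<subseteq> W \<and> acyclic_mg {e\<in>F. ends e \<inter> X = {}} ends} \<subseteq> Pow W" by auto
  then show "finite (card ` {X. X \<subseteq> W \<and> acyclic_mg {e\<in>F. ends e \<inter> X = {}} ends})"
    using assms(1) finite_subset by blast
  show "card X \<in> card ` {X. X \<subseteq> W \<and> acyclic_mg {e\<in>F. ends e \<inter> X = {}} ends}" using assms by blast
qed

lemma rtranclp_reach:
  assumes S: "\<forall>f. Q\<^sup>*\<^sup>* e f \<longrightarrow> f \<in> S" and Q: "\<forall>f h. Q f h \<longrightarrow> (\<exists>x. x \<in> ends f \<and> x \<in> ends h)"
    and uv: "\<forall>f\<in>S. \<exists>u v. ends f = {u, v}" and a: "a \<in> ends e"
  shows "Q\<^sup>*\<^sup>* e f \<Longrightarrow> y \<in> ends f \<Longrightarrow> reach S ends a y"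
proof (induction arbitrary: y rule: rtranclp_induct)
  case base
  have "e \<in> S" using S by auto
  moreover obtain u v where "ends e = {u, v}" using uv calculation by blast
  ultimately show ?case using a base by (intro reach_edge_ends[of e S ends u v a y])
next
  case (step f h)
  obtain x where x: "x \<in> ends f" "x \<in> ends h" using Q step(2) by blast
  have "h \<in> S" using S step(1,2) by (meson rtranclp.rtrancl_into_rtrancl)
  moreover obtain u v where "ends h = {u, v}" using uv calculation by blast
  ultimately have "reach S ends x y" using x step.prems by (intro reach_edge_ends[of h S ends u v x y])
  with step.IH[OF x(1)] show ?case by (rule reach_trans)
qed

section \<open>Essential edges and vertices\<close>

locale mgraph =
  fixes V :: "'v set" and E :: "'e set" and ends :: "'e \<Rightarrow> 'v set"
  assumes multigraph: "multigraph V E ends"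
begin

lemma finite_V: "finite V" and finite_E: "finite E"
  using multigraph by (auto simp: multigraph_def)

lemma ends_subset_V: "e \<in> E \<Longrightarrow> ends e \<subseteq> V"
  using multigraph by (auto simp: multigraph_def)

lemma ends_doubleton: "e \<in> E \<Longrightarrow> \<exists>u v. ends e = {u, v}"
proof -
  assume e: "e \<in> E"
  then have "ends e \<subseteq> V" "ends e \<noteq> {}" "card (ends e) \<le> 2" using multigraph by (auto simp: multigraph_def)
  moreover have "finite (ends e)" using calculation(1) finite_V by (rule finite_subset)
  ultimately obtain u v where "ends e = {u, v}" by (elim card_le_2_doubleton) auto
  then show ?thesis by blast
qed

lemma reach_in_edge: "f \<in> F \<Longrightarrow> F \<subseteq> E \<Longrightarrow> x \<in> ends f \<Longrightarrow> y \<in> ends f \<Longrightarrow> reach F ends x y"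
proof -
  assume a: "f \<in> F" "F \<subseteq> E" "x \<in> ends f" "y \<in> ends f"
  obtain u w where "ends f = {u, w}" using ends_doubleton a by blast
  then show ?thesis using a by (intro reach_edge_ends[of f F ends u w x y])
qed

definition on_cycle :: "'e \<Rightarrow> bool" where
  "on_cycle g \<longleftrightarrow> (\<exists>es vs. is_cycle E ends es vs \<and> g \<in> set es)"

definition reaches_cycle :: "'e set \<Rightarrow> 'v \<Rightarrow> bool" where
  "reaches_cycle F x \<longleftrightarrow> (\<exists>es vs. is_cycle F ends es vs \<and> reach F ends x (hd vs))"

abbreviation ess_edge :: "'e \<Rightarrow> bool" where "ess_edge e \<equiv> essential_edge E ends e"
abbreviation ess_vertex :: "'v \<Rightarrow> bool" where "ess_vertex v \<equiv> essential_vertex V E ends v"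

definition ess_degree :: "'v \<Rightarrow> nat" where
  "ess_degree x = card {e\<in>E. ess_edge e \<and> x \<in> ends e} + card {e\<in>E. ess_edge e \<and> ends e = {x}}"

lemma ess_vertex_iff: "ess_vertex v \<longleftrightarrow> v \<in> V \<and> ess_degree v \<ge> 3"
  by (simp add: essential_vertex_def ess_degree_def)

lemma ess_edge_iff:
  "ess_edge e \<longleftrightarrow> e \<in> E \<and> (on_cycle e \<or> (\<exists>u v. u \<noteq> v \<and> ends e = {u, v} \<and> \<not> reach (E - {e}) ends u v
     \<and> reaches_cycle (E - {e}) u \<and> reaches_cycle (E - {e}) v))"
  by (simp add: essential_edge_def on_cycle_def reaches_cycle_def)

lemma ess_edge_in_E: "ess_edge f \<Longrightarrow> f \<in> E"
  using ess_edge_iff by blast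

lemma on_cycle_ess_edge: "on_cycle e \<Longrightarrow> ess_edge e"
  unfolding ess_edge_iff using is_cycle_edges_subset by (fastforce simp: on_cycle_def)

lemma is_cycle_ess_edge: "is_cycle F ends es vs \<Longrightarrow> F \<subseteq> E \<Longrightarrow> e \<in> set es \<Longrightarrow> ess_edge e"
  by (meson is_cycle_mono is_cycle_edges_subset on_cycle_def on_cycle_ess_edge subset_trans)

lemma reaches_cycle_reach: "reaches_cycle F x \<Longrightarrow> reach F ends y x \<Longrightarrow> reaches_cycle F y"
  unfolding reaches_cycle_def by (meson reach_trans)

lemma reaches_cycle_mono: "reaches_cycle F x \<Longrightarrow> F \<subseteq> G \<Longrightarrow> reaches_cycle G x"
  unfolding reaches_cycle_def by (meson is_cycle_mono is_cycle_edges_subset reach_mono subset_trans)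

lemma reaches_cycle_on_cycle: "is_cycle F ends es vs \<Longrightarrow> x \<in> set vs \<Longrightarrow> reaches_cycle F x"
  unfolding reaches_cycle_def by (meson is_cycle_hd is_cycle_reach is_cycle_edges_subset reach_mono)

lemma reaches_cycle_Diff_edge:
  assumes "reaches_cycle F q" "\<not> reach F ends q a" "g \<in> F" "a \<in> ends g" "ends g = {u, v}"
  shows "reaches_cycle (F - {g}) q"
proof -
  obtain es vs where c: "is_cycle F ends es vs" "reach F ends q (hd vs)"
    using assms(1) reaches_cycle_def by auto
  have r: "reach (F - {g}) ends q (hd vs)"
    using reach_avoiding_edge[of F ends q "hd vs" a g u v] c(2) assms(2-5) by blast
  have "g \<notin> set es"
  proof
    assume "g \<in> set es"
    then have "a \<in> set vs" using is_cycle_ends_subset[OF c(1)] assms(4) by blast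
    then have "reach (set es) ends (hd vs) a" by (rule is_cycle_reach[OF c(1) is_cycle_hd[OF c(1)]])
    then have "reach F ends (hd vs) a" using is_cycle_edges_subset[OF c(1)] by (rule reach_mono)
    with c(2) have "reach F ends q a" by (rule reach_trans)
    then show False using assms(2) by contradiction
  qed
  then have "is_cycle (F - {g}) ends es vs"
    using is_cycle_edges_subset[OF c(1)] by (intro is_cycle_mono[OF c(1)]) auto
  then show ?thesis using r reaches_cycle_def by blast
qed

lemma reaches_cycle_Diff_non_cycle_edge:
  assumes g: "g \<in> E" "\<not> on_cycle g" and h: "ess_edge h" "h \<noteq> g" and x: "x \<in> ends h"
  shows "reaches_cycle (E - {g}) x"
proof -
  have hE: "h \<in> E" using h ess_edge_in_E by blast
  consider "on_cycle h" | u v where "u \<noteq> v" "ends h = {u, v}" "\<not> reach (E - {h}) ends u v"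
     "reaches_cycle (E - {h}) u" "reaches_cycle (E - {h}) v" using h(1) ess_edge_iff by blast
  then show ?thesis
  proof cases
    case 1
    then obtain es vs where c: "is_cycle E ends es vs" "h \<in> set es" by (auto simp: on_cycle_def)
    have "g \<notin> set es" using g c on_cycle_def by blast
    then have "is_cycle (E - {g}) ends es vs"
      using is_cycle_edges_subset[OF c(1)] by (intro is_cycle_mono[OF c(1)]) auto
    moreover have "x \<in> set vs" using is_cycle_ends_subset[OF c(1,2)] x by auto
    ultimately show ?thesis by (rule reaches_cycle_on_cycle)
  next
    case 2
    obtain a b where ab: "ends g = {a, b}" using ends_doubleton g by blast
    have gE: "g \<in> E - {h}" using g h by auto
    have xuv: "x = u \<or> x = v" using 2 x by auto
    have ruv: "reach (E - {g}) ends u v" using 2 hE h by (intro reach_edge) auto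
    have "\<not> reach (E - {h}) ends u a \<or> \<not> reach (E - {h}) ends v a"
      using 2(3) by (meson reach_sym reach_trans)
    then show ?thesis
    proof
      assume "\<not> reach (E - {h}) ends u a"
      then have "reaches_cycle (E - {h} - {g}) u" using reaches_cycle_Diff_edge[OF 2(4) _ gE _ ab] ab by auto
      then have "reaches_cycle (E - {g}) u" by (rule reaches_cycle_mono) auto
      then show ?thesis using xuv ruv by (metis reaches_cycle_reach reach_sym)
    next
      assume "\<not> reach (E - {h}) ends v a"
      then have "reaches_cycle (E - {h} - {g}) v" using reaches_cycle_Diff_edge[OF 2(5) _ gE _ ab] ab by auto
      then have "reaches_cycle (E - {g}) v" by (rule reaches_cycle_mono) auto
      then show ?thesis using xuv ruv by (metis reaches_cycle_reach reach_sym)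
    qed
  qed
qed

lemma non_ess_edgeD:
  assumes "g \<in> E" "\<not> ess_edge g" "ends g = {a, b}" "a \<noteq> b"
  shows "\<not> on_cycle g" "\<not> reach (E - {g}) ends a b"
    "\<not> (reaches_cycle (E - {g}) a \<and> reaches_cycle (E - {g}) b)"
proof -
  show no: "\<not> on_cycle g" using assms on_cycle_ess_edge by blast
  show nr: "\<not> reach (E - {g}) ends a b"
    using reach_Diff_imp_cycle[of g E ends a b] assms on_cycle_def no by blast
  show "\<not> (reaches_cycle (E - {g}) a \<and> reaches_cycle (E - {g}) b)"
    using assms nr ess_edge_iff by blast
qed

definition on_ess_edge :: "'v \<Rightarrow> bool" where
  "on_ess_edge x \<longleftrightarrow> (\<exists>h\<in>E. ess_edge h \<and> x \<in> ends h)"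

abbreviation non_ess_edges :: "'e set" where
  "non_ess_edges \<equiv> {f\<in>E. \<not> ess_edge f}"

text \<open>The first edge of a non-essential path between two such vertices would be a bridge with
  a cycle on both sides, hence essential.\<close>

lemma on_ess_edge_reach_non_ess_eq:
  assumes "on_ess_edge x" "on_ess_edge y" "reach non_ess_edges ends x y"
  shows "x = y"
proof (rule ccontr)
  assume "x \<noteq> y"
  obtain es vs where p: "simple_path ends non_ess_edges es vs" "hd vs = x" "last vs = y"
    using reach_imp_simple_path[OF assms(3)] by blast
  note first = simple_path_first_edge[OF p \<open>x \<noteq> y\<close>]
  define g where "g = es ! 0"
  have g: "g \<in> E" "\<not> ess_edge g" "ends g = {x, vs ! 1}" "x \<noteq> vs ! 1" using first g_def by auto
  note ng = non_ess_edgeD[OF g]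
  obtain h where h: "h \<in> E" "ess_edge h" "x \<in> ends h" using assms(1) on_ess_edge_def by auto
  obtain h' where h': "h' \<in> E" "ess_edge h'" "y \<in> ends h'" using assms(2) on_ess_edge_def by auto
  have c1: "reaches_cycle (E - {g}) x"
    using reaches_cycle_Diff_non_cycle_edge[OF g(1) ng(1) h(2) _ h(3)] g h by auto
  have c2: "reaches_cycle (E - {g}) y"
    using reaches_cycle_Diff_non_cycle_edge[OF g(1) ng(1) h'(2) _ h'(3)] g h' by auto
  have "reach (non_ess_edges - {g}) ends (vs ! 1) y"
    using simple_path_tail_reach[OF p(1)] first p g_def by auto
  then have "reach (E - {g}) ends (vs ! 1) y" by (rule reach_mono) auto
  then have "reaches_cycle (E - {g}) (vs ! 1)" using c2 by (rule reaches_cycle_reach[rotated])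
  then show False using ng(3) c1 by blast
qed

lemma ess_edge_at_vertex_reaching_cycle:
  assumes h: "h \<in> E" "ess_edge h" "x \<in> ends h" and "reaches_cycle (E - {h}) x"
  shows "\<exists>h'\<in>E. ess_edge h' \<and> x \<in> ends h' \<and> h' \<noteq> h"
proof -
  obtain es vs where c: "is_cycle (E - {h}) ends es vs" "reach (E - {h}) ends x (hd vs)"
    using assms(4) unfolding reaches_cycle_def by blast
  have cE: "is_cycle E ends es vs" using is_cycle_edges_subset[OF c(1)] by (intro is_cycle_mono[OF c(1)]) auto
  show ?thesis
  proof (cases "x \<in> set vs")
    case True
    then obtain e where "e \<in> set es" "x \<in> ends e" using is_cycle_vertex_edge[OF c(1)] by blast
    moreover have "set es \<subseteq> E - {h}" using is_cycle_edges_subset[OF c(1)] .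
    ultimately show ?thesis using is_cycle_ess_edge[OF cE] by blast
  next
    case False
    then have "x \<noteq> hd vs" using is_cycle_hd[OF c(1)] by auto
    obtain es' vs' where p: "simple_path ends (E - {h}) es' vs'" "hd vs' = x" "last vs' = hd vs"
      using reach_imp_simple_path[OF c(2)] by blast
    note first = simple_path_first_edge[OF p \<open>x \<noteq> hd vs\<close>]
    define f where "f = es' ! 0"
    have f: "f \<in> E" "ends f = {x, vs' ! 1}" "x \<noteq> vs' ! 1" "f \<noteq> h" using first f_def by auto
    show ?thesis
    proof (cases "ess_edge f")
      case False
      note nf = non_ess_edgeD[OF f(1) False f(2,3)]
      have x_side: "reaches_cycle (E - {f}) x"
        using reaches_cycle_Diff_non_cycle_edge[OF f(1) nf(1) h(2) f(4)[symmetric] h(3)] .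
      have "f \<notin> set es" using nf(1) cE on_cycle_def by blast
      then have cf: "is_cycle (E - {f}) ends es vs"
        using is_cycle_edges_subset[OF cE] by (intro is_cycle_mono[OF cE]) auto
      have "reach (E - {h} - {es' ! 0}) ends (vs' ! 1) (hd vs)"
        using simple_path_tail_reach[OF p(1)] first p by auto
      then have "reach (E - {f}) ends (vs' ! 1) (hd vs)" unfolding f_def by (rule reach_mono) auto
      then have "reaches_cycle (E - {f}) (vs' ! 1)" using cf reaches_cycle_def by blast
      then show ?thesis using nf(3) x_side by blast
    qed (use f in auto)
  qed
qed

lemma ess_edge_other_at_end:
  assumes h: "h \<in> E" "ess_edge h" "x \<in> ends h" "ends h \<noteq> {x}"
  shows "\<exists>h'\<in>E. ess_edge h' \<and> x \<in> ends h' \<and> h' \<noteq> h"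
proof -
  obtain u0 v0 where uv: "ends h = {u0, v0}" using ends_doubleton[OF h(1)] by blast
  define p where "p = (if x = u0 then v0 else u0)"
  have p: "ends h = {x, p}" "p \<noteq> x" using uv h(3,4) by (auto simp: p_def)
  consider "on_cycle h" | u v where "u \<noteq> v" "ends h = {u, v}" "\<not> reach (E - {h}) ends u v"
     "reaches_cycle (E - {h}) u" "reaches_cycle (E - {h}) v" using h(2) ess_edge_iff by blast
  then show ?thesis
  proof cases
    case 1
    then obtain es vs where c: "is_cycle E ends es vs" "h \<in> set es" by (auto simp: on_cycle_def)
    have xv: "x \<in> set vs" using is_cycle_ends_subset[OF c] h by auto
    have "length es \<noteq> 1"
    proof
      assume "length es = 1"
      then obtain e0 where "es = [e0]" by (cases es) auto
      then have "ends h = {vs ! 0}" using c by (auto simp: is_cycle_def)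
      then show False using p by auto
    qed
    then have "card {e\<in>set es. x \<in> ends e} \<ge> 2" using is_cycle_incident_edges_ge_2[OF c(1) xv] by simp
    moreover have "card {e\<in>set es. x \<in> ends e} \<le> card {h}" if "{e\<in>set es. x \<in> ends e} \<subseteq> {h}"
      using that by (intro card_mono) auto
    ultimately have "\<not> {e\<in>set es. x \<in> ends e} \<subseteq> {h}" by auto
    then obtain h' where "h' \<in> set es" "x \<in> ends h'" "h' \<noteq> h" by blast
    moreover have "set es \<subseteq> E" using is_cycle_edges_subset[OF c(1)] .
    ultimately show ?thesis using is_cycle_ess_edge[OF c(1)] by blast
  next
    case 2
    have "x = u \<or> x = v" using 2 h by auto
    then have "reaches_cycle (E - {h}) x" using 2 by blast
    then show ?thesis by (rule ess_edge_at_vertex_reaching_cycle[OF h(1-3)])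
  qed
qed

lemma on_ess_edge_ess_degree: "on_ess_edge x \<Longrightarrow> ess_degree x \<ge> 2"
proof -
  assume "on_ess_edge x"
  then obtain h where h: "h \<in> E" "ess_edge h" "x \<in> ends h" using on_ess_edge_def by auto
  have fin: "finite {e\<in>E. ess_edge e \<and> x \<in> ends e}" "finite {e\<in>E. ess_edge e \<and> ends e = {x}}"
    using finite_E by auto
  show ?thesis
  proof (cases "ends h = {x}")
    case True
    then have "h \<in> {e\<in>E. ess_edge e \<and> x \<in> ends e}" "h \<in> {e\<in>E. ess_edge e \<and> ends e = {x}}" using h by auto
    then have "card {e\<in>E. ess_edge e \<and> x \<in> ends e} > 0" "card {e\<in>E. ess_edge e \<and> ends e = {x}} > 0"
      using fin by (auto simp: card_gt_0_iff)
    then show ?thesis by (simp add: ess_degree_def)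
  next
    case False
    then obtain h' where h': "h' \<in> E" "ess_edge h'" "x \<in> ends h'" "h' \<noteq> h"
      using ess_edge_other_at_end h by blast
    then have "{h, h'} \<subseteq> {e\<in>E. ess_edge e \<and> x \<in> ends e}" using h by auto
    then have "card {h, h'} \<le> card {e\<in>E. ess_edge e \<and> x \<in> ends e}" using fin by (intro card_mono)
    then show ?thesis using h'(4) by (simp add: ess_degree_def)
  qed
qed

lemma ess_vertex_on_ess_edge: "ess_vertex v \<Longrightarrow> on_ess_edge v"
proof -
  assume "ess_vertex v"
  then have "ess_degree v \<ge> 3" using ess_vertex_iff by auto
  moreover have "{e\<in>E. ess_edge e \<and> ends e = {v}} \<subseteq> {e\<in>E. ess_edge e \<and> v \<in> ends e}" by auto
  ultimately have "{e\<in>E. ess_edge e \<and> v \<in> ends e} \<noteq> {}" unfolding ess_degree_def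
    by (metis (no_types, lifting) add_0 card.empty not_numeral_le_zero subset_empty)
  then show ?thesis unfolding on_ess_edge_def by auto
qed

section \<open>The similarity classes\<close>


abbreviation crit :: "'v \<Rightarrow> 'e \<Rightarrow> bool" where
  "crit x f \<equiv> critical V E ends x f"

lemma critical_iff: "crit x f \<longleftrightarrow> x \<in> ends f \<and> ess_vertex x \<and> ess_edge f"
  by (simp add: critical_def)

definition linked :: "'e \<Rightarrow> 'e \<Rightarrow> bool" where
  "linked f h \<longleftrightarrow> f \<in> E \<and> h \<in> E \<and> (\<exists>x. x \<in> ends f \<and> x \<in> ends h \<and> \<not> crit x f \<and> \<not> crit x h)"

definition sim_class :: "'e \<Rightarrow> 'e set" where
  "sim_class e = {f. linked\<^sup>*\<^sup>* e f}"

lemma linked_sym: "linked f h \<Longrightarrow> linked h f"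
  unfolding linked_def by blast

lemma linked_rtrancl_sym: "linked\<^sup>*\<^sup>* a b \<Longrightarrow> linked\<^sup>*\<^sup>* b a"
  by (induction rule: rtranclp_induct) (auto intro: linked_sym converse_rtranclp_into_rtranclp)

lemma linked_rtrancl_in_E: "linked\<^sup>*\<^sup>* e f \<Longrightarrow> e \<in> E \<Longrightarrow> f \<in> E"
  by (induction rule: rtranclp_induct) (auto simp: linked_def)

lemma sim_class_subset: "e \<in> E \<Longrightarrow> sim_class e \<subseteq> E"
  using linked_rtrancl_in_E sim_class_def by blast

lemma sim_class_self: "e \<in> sim_class e"
  by (simp add: sim_class_def)

lemma sim_class_eq: "f \<in> sim_class e \<Longrightarrow> sim_class f = sim_class e"
  unfolding sim_class_def by (auto intro: rtranclp_trans linked_rtrancl_sym)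

lemma sim_class_linked: "f \<in> sim_class e \<Longrightarrow> linked f h \<Longrightarrow> h \<in> sim_class e"
  unfolding sim_class_def by (auto intro: rtranclp.rtrancl_into_rtrancl)

lemma sim_class_subsetI:
  assumes "\<And>f h. f \<in> S \<Longrightarrow> linked f h \<Longrightarrow> h \<in> S" "e \<in> S"
  shows "sim_class e \<subseteq> S"
proof
  fix f assume "f \<in> sim_class e"
  then have "linked\<^sup>*\<^sup>* e f" by (simp add: sim_class_def)
  then show "f \<in> S" by (induction rule: rtranclp_induct) (use assms in auto)
qed

lemma linked_at_non_ess_vertex:
  "f \<in> E \<Longrightarrow> h \<in> E \<Longrightarrow> x \<in> ends f \<Longrightarrow> x \<in> ends h \<Longrightarrow> \<not> ess_vertex x \<Longrightarrow> linked f h"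
  unfolding linked_def critical_iff by blast

definition noncritical_walk :: "'e list \<Rightarrow> 'v list \<Rightarrow> bool" where
  "noncritical_walk es vs \<longleftrightarrow> es \<noteq> [] \<and> length vs = length es + 1 \<and> set es \<subseteq> E \<and>
     (\<forall>i<length es. ends (es ! i) = {vs ! i, vs ! Suc i}) \<and>
     (\<forall>i. 0 < i \<and> i < length es \<longrightarrow> \<not> crit (vs ! i) (es ! (i - 1)) \<and> \<not> crit (vs ! i) (es ! i))"

lemma fern_sim_iff_walk:
  "fern_sim V E ends e f \<longleftrightarrow> (\<exists>es vs. noncritical_walk es vs \<and> hd es = e \<and> last es = f)"
  unfolding fern_sim_def noncritical_walk_def by blast

lemma noncritical_walk_linked:
  assumes w: "noncritical_walk es vs"
  shows "i < length es \<Longrightarrow> linked\<^sup>*\<^sup>* (es ! 0) (es ! i)"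
proof (induction i)
  case (Suc i)
  have "linked (es ! i) (es ! Suc i)" unfolding linked_def
  proof (intro conjI exI)
    show "es ! i \<in> E" "es ! Suc i \<in> E" using w Suc.prems by (auto simp: noncritical_walk_def)
    show "vs ! Suc i \<in> ends (es ! i)" "vs ! Suc i \<in> ends (es ! Suc i)"
      using w Suc.prems by (auto simp: noncritical_walk_def)
    show "\<not> crit (vs ! Suc i) (es ! i)" "\<not> crit (vs ! Suc i) (es ! Suc i)"
      using w Suc.prems unfolding noncritical_walk_def by (metis diff_Suc_1 zero_less_Suc)+
  qed
  then show ?case using Suc by (meson Suc_lessD rtranclp.rtrancl_into_rtrancl)
qed simp

lemma fern_sim_imp_linked: "fern_sim V E ends e f \<Longrightarrow> linked\<^sup>*\<^sup>* e f"
proof -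
  assume "fern_sim V E ends e f"
  then obtain es vs where w: "noncritical_walk es vs" "hd es = e" "last es = f"
    using fern_sim_iff_walk by blast
  have "es \<noteq> []" using w noncritical_walk_def by blast
  then show ?thesis using noncritical_walk_linked[OF w(1), of "length es - 1"] w
    by (simp add: hd_conv_nth last_conv_nth)
qed

lemma noncritical_walk_snoc:
  assumes w: "noncritical_walk es vs" and g: "g \<in> E" "ends g = {last vs, y}"
    and nc: "\<not> crit (last vs) (last es)" "\<not> crit (last vs) g"
  shows "noncritical_walk (es @ [g]) (vs @ [y])"
proof -
  define l where "l = length es"
  have l: "l > 0" "length vs = l + 1" using w by (auto simp: noncritical_walk_def l_def)
  have "vs \<noteq> []" using l by auto
  then have last: "last vs = vs ! l" "last es = es ! (l - 1)"
    using l w by (simp_all add: last_conv_nth l_def noncritical_walk_def)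
  show ?thesis unfolding noncritical_walk_def
  proof (intro conjI allI impI)
    show "length (vs @ [y]) = length (es @ [g]) + 1" using l by (simp add: l_def)
    show "set (es @ [g]) \<subseteq> E" using w g by (auto simp: noncritical_walk_def)
    fix i assume i: "i < length (es @ [g])"
    show "ends ((es @ [g]) ! i) = {(vs @ [y]) ! i, (vs @ [y]) ! Suc i}"
    proof (cases "i < l")
      case True then show ?thesis using w l by (auto simp: noncritical_walk_def nth_append l_def)
    next
      case False then have "i = l" using i by (simp add: l_def)
      then show ?thesis using g last l by (simp add: nth_append l_def)
    qed
  next
    fix i assume i: "0 < i \<and> i < length (es @ [g])"
    have "\<not> crit ((vs @ [y]) ! i) ((es @ [g]) ! (i - 1)) \<and> \<not> crit ((vs @ [y]) ! i) ((es @ [g]) ! i)"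
    proof (cases "i < l")
      case True then show ?thesis using w l i by (auto simp: noncritical_walk_def nth_append l_def)
    next
      case False then have "i = l" using i by (simp add: l_def)
      then show ?thesis using nc last l by (simp add: nth_append l_def)
    qed
    then show "\<not> crit ((vs @ [y]) ! i) ((es @ [g]) ! (i - 1))" "\<not> crit ((vs @ [y]) ! i) ((es @ [g]) ! i)"
      by simp_all
  qed simp
qed

lemma noncritical_walk_replace_last:
  assumes w: "noncritical_walk es vs" "length es \<ge> 2" and g: "g \<in> E" "ends g = {last (butlast vs), y}"
    and nc: "\<not> crit (last (butlast vs)) g"
  shows "noncritical_walk (butlast es @ [g]) (butlast vs @ [y])"
proof -
  define l where "l = length es"
  have l: "l \<ge> 2" "length vs = l + 1" using w by (auto simp: noncritical_walk_def l_def)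
  define es' where "es' = butlast es @ [g]"
  define vs' where "vs' = butlast vs @ [y]"
  have les: "length es' = l" "length vs' = l + 1" using l by (simp_all add: es'_def vs'_def l_def)
  have ev: "es' ! i = es ! i" if "i < l - 1" for i
    using that l by (simp add: es'_def nth_append nth_butlast l_def)
  have eg: "es' ! (l - 1) = g" using l by (simp add: es'_def nth_append l_def)
  have vv: "vs' ! i = vs ! i" if "i < l" for i using that l by (simp add: vs'_def nth_append nth_butlast)
  have vy: "vs' ! l = y" using l by (simp add: vs'_def nth_append)
  have "butlast vs \<noteq> []" using l by (cases vs rule: rev_cases) auto
  then have x: "last (butlast vs) = vs ! (l - 1)" using l by (simp add: last_conv_nth nth_butlast)
  have "noncritical_walk es' vs'" unfolding noncritical_walk_def
  proof (intro conjI allI impI)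
    show "es' \<noteq> []" by (simp add: es'_def)
    show "length vs' = length es' + 1" using les by simp
    show "set es' \<subseteq> E" using w g by (auto simp: noncritical_walk_def es'_def dest: in_set_butlastD)
    fix i assume i: "i < length es'"
    show "ends (es' ! i) = {vs' ! i, vs' ! Suc i}"
    proof (cases "i < l - 1")
      case True then show ?thesis using w ev vv l by (auto simp: noncritical_walk_def l_def)
    next
      case False then have "i = l - 1" using i les by arith
      then show ?thesis using eg vv vy g x l by simp
    qed
  next
    fix i assume i: "0 < i \<and> i < length es'"
    have "\<not> crit (vs' ! i) (es' ! (i - 1)) \<and> \<not> crit (vs' ! i) (es' ! i)"
    proof (cases "i < l - 1")
      case True then show ?thesis using w ev vv l i by (auto simp: noncritical_walk_def l_def)
    next
      case False then have il: "i = l - 1" using i les by arith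
      have "0 < l - 1 \<and> l - 1 < length es" using l by (simp add: l_def)
      then have "\<not> crit (vs ! (l - 1)) (es ! (l - 1 - 1))" using w(1) unfolding noncritical_walk_def by blast
      then show ?thesis using il eg vv ev nc x l by simp
    qed
    then show "\<not> crit (vs' ! i) (es' ! (i - 1))" "\<not> crit (vs' ! i) (es' ! i)" by simp_all
  qed
  then show ?thesis by (simp add: es'_def vs'_def)
qed

lemma noncritical_walk_extend:
  assumes w: "noncritical_walk es vs" "hd es = e" "last es = f" and "linked f g"
  shows "\<exists>es vs. noncritical_walk es vs \<and> hd es = e \<and> last es = g"
proof -
  obtain x where x: "x \<in> ends f" "x \<in> ends g" "\<not> crit x f" "\<not> crit x g" "g \<in> E"
    using \<open>linked f g\<close> linked_def by blast
  obtain u v where "ends g = {u, v}" using ends_doubleton x(5) by blast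
  then obtain y where g: "ends g = {x, y}" using x(2) by (metis insert_commute insertE singletonD)
  define l where "l = length es"
  have l: "l > 0" "length vs = l + 1" using w by (auto simp: noncritical_walk_def l_def)
  have "f = es ! (l - 1)" using w l by (simp add: last_conv_nth l_def)
  then have ef: "ends f = {vs ! (l - 1), vs ! l}" using w l unfolding noncritical_walk_def l_def
    by (metis Suc_pred' diff_less zero_less_one)
  have "vs \<noteq> []" using l by auto
  then have lastv: "last vs = vs ! l" using l by (simp add: last_conv_nth)
  show ?thesis
  proof (cases "x = vs ! l")
    case True
    then have "noncritical_walk (es @ [g]) (vs @ [y])"
      using noncritical_walk_snoc[OF w(1) x(5)] g x w(3) lastv by simp
    then show ?thesis using w l by (metis hd_append2 last_snoc noncritical_walk_def)
  next
    case False
    then have xl: "x = vs ! (l - 1)" using ef x(1) by auto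
    show ?thesis
    proof (cases "l = 1")
      case True
      then have "es = [f]" using w by (cases es) (auto simp: l_def)
      then have "noncritical_walk [f] [vs ! 1, x]"
        using w ef xl True by (auto simp: noncritical_walk_def insert_commute)
      then have "noncritical_walk [f, g] [vs ! 1, x, y]"
        using noncritical_walk_snoc[of "[f]" "[vs ! 1, x]" g y] x g by simp
      then show ?thesis using w \<open>es = [f]\<close> by auto
    next
      case False
      then have "length es \<ge> 2" using l unfolding l_def by linarith
      moreover have "butlast vs \<noteq> []" using l by (cases vs rule: rev_cases) auto
      then have "last (butlast vs) = x" using xl l by (simp add: last_conv_nth nth_butlast)
      ultimately have "noncritical_walk (butlast es @ [g]) (butlast vs @ [y])"
        using noncritical_walk_replace_last[OF w(1) _ x(5)] g x by simp
      moreover have "hd (butlast es @ [g]) = e"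
        using w \<open>length es \<ge> 2\<close> by (cases es) (auto simp: hd_append)
      ultimately show ?thesis by (metis last_snoc)
    qed
  qed
qed

lemma linked_imp_fern_sim: "linked\<^sup>*\<^sup>* e f \<Longrightarrow> e \<in> E \<Longrightarrow> fern_sim V E ends e f"
proof (induction rule: rtranclp_induct)
  case base
  obtain u v where "ends e = {u, v}" using ends_doubleton base by blast
  then have "noncritical_walk [e] [u, v]" using base by (auto simp: noncritical_walk_def)
  then show ?case using fern_sim_iff_walk by fastforce
next
  case (step f g)
  then show ?case using noncritical_walk_extend fern_sim_iff_walk by metis
qed

lemma sim_classes_eq: "sim_classes V E ends = sim_class ` E"
proof -
  have "{f\<in>E. fern_sim V E ends e f} = sim_class e" if "e \<in> E" for e
    using that fern_sim_imp_linked linked_imp_fern_sim sim_class_subset sim_class_def by blast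
  then show ?thesis unfolding sim_classes_def by (auto simp: image_def)
qed

section \<open>Essential chains\<close>


definition verts :: "'e set \<Rightarrow> 'v set" where
  "verts C = \<Union>(ends ` C)"

lemma verts_subset: "C \<subseteq> E \<Longrightarrow> verts C \<subseteq> V"
  using ends_subset_V by (auto simp: verts_def)

lemma sim_class_connected:
  assumes e0: "e0 \<in> E"
  shows "connected_mg (verts (sim_class e0)) (sim_class e0) ends"
proof -
  let ?C = "sim_class e0"
  obtain a b where "ends e0 = {a, b}" using ends_doubleton e0 by blast
  then have a: "a \<in> ends e0" by simp
  have r: "reach ?C ends a y" if y: "y \<in> verts ?C" for y
  proof -
    obtain f where f: "f \<in> ?C" "y \<in> ends f" using y unfolding verts_def by blast
    show ?thesis
    proof (rule rtranclp_reach[of linked e0 ?C])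
      show "\<forall>f\<in>?C. \<exists>u v. ends f = {u, v}" using sim_class_subset[OF e0] ends_doubleton by blast
    qed (use a f in \<open>auto simp: sim_class_def linked_def\<close>)
  qed
  have "a \<in> verts ?C" using a sim_class_self unfolding verts_def by blast
  then show ?thesis unfolding connected_mg_def by (metis empty_iff r reach_sym reach_trans)
qed

lemma boundary_ess_vertex:
  assumes e0: "e0 \<in> E" and v: "v \<in> verts (sim_class e0)" and g: "g \<in> E - sim_class e0" "v \<in> ends g"
  shows "ess_vertex v"
proof (rule ccontr)
  assume "\<not> ess_vertex v"
  obtain f where f: "f \<in> sim_class e0" "v \<in> ends f" using v verts_def by blast
  then have "linked f g"
    using linked_at_non_ess_vertex[of f g v] g sim_class_subset[OF e0] \<open>\<not> ess_vertex v\<close> by blast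
  then show False using sim_class_linked f(1) g by blast
qed

text \<open>An essential edge linked to the class would meet it at a vertex joined to \<open>v\<close> by
  non-essential edges, hence at \<open>v\<close> itself, where its incidence is critical.\<close>

lemma sim_class_non_ess:
  assumes v: "ess_vertex v" and g: "g \<in> E" "\<not> ess_edge g" "v \<in> ends g"
  shows "sim_class g \<subseteq> non_ess_edges"
proof -
  let ?S = "{f\<in>E. \<not> ess_edge f \<and> (\<exists>y\<in>ends f. reach non_ess_edges ends v y)}"
  have "sim_class g \<subseteq> ?S"
  proof (rule sim_class_subsetI)
    fix f h assume f: "f \<in> ?S" and "linked f h"
    then obtain x where x: "x \<in> ends f" "x \<in> ends h" "\<not> crit x h" "h \<in> E" using linked_def by blast
    obtain y where y: "y \<in> ends f" "reach non_ess_edges ends v y" using f by blast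
    have "reach non_ess_edges ends y x" using reach_in_edge[of f non_ess_edges y x] f y(1) x(1) by blast
    with y(2) have rx: "reach non_ess_edges ends v x" by (rule reach_trans)
    show "h \<in> ?S"
    proof (cases "ess_edge h")
      case True
      then have "on_ess_edge x" using x on_ess_edge_def by blast
      then have "x = v" using on_ess_edge_reach_non_ess_eq ess_vertex_on_ess_edge[OF v] rx by blast
      then show ?thesis using critical_iff x v True by simp
    next
      case False then show ?thesis using x rx by blast
    qed
  next
    show "g \<in> ?S" using g reach_refl[of non_ess_edges ends v] by blast
  qed
  then show ?thesis by auto
qed

definition ess_linked :: "'e \<Rightarrow> 'e \<Rightarrow> bool" where
  "ess_linked f h \<longleftrightarrow> linked f h \<and> ess_edge f \<and> ess_edge h"

definition ess_chain :: "'e \<Rightarrow> 'e set" where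
  "ess_chain e = {f. ess_linked\<^sup>*\<^sup>* e f}"

lemma ess_linked_shared_vertex: "ess_linked f h \<Longrightarrow> \<exists>x. x \<in> ends f \<and> x \<in> ends h \<and> \<not> ess_vertex x"
  unfolding ess_linked_def linked_def critical_iff by blast

lemma ess_linkedI:
  "ess_edge f \<Longrightarrow> ess_edge h \<Longrightarrow> x \<in> ends f \<Longrightarrow> x \<in> ends h \<Longrightarrow> \<not> ess_vertex x \<Longrightarrow> ess_linked f h"
  unfolding ess_linked_def using linked_at_non_ess_vertex ess_edge_in_E by blast

lemma ess_linked_rtrancl_sym: "ess_linked\<^sup>*\<^sup>* a b \<Longrightarrow> ess_linked\<^sup>*\<^sup>* b a"
  by (induction rule: rtranclp_induct)
    (auto simp: ess_linked_def intro: linked_sym converse_rtranclp_into_rtranclp)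

lemma ess_chain_self: "e \<in> ess_chain e"
  by (simp add: ess_chain_def)

lemma ess_chain_ess_edge: "ess_edge e \<Longrightarrow> f \<in> ess_chain e \<Longrightarrow> ess_edge f"
proof -
  assume e: "ess_edge e" and "f \<in> ess_chain e"
  then have "ess_linked\<^sup>*\<^sup>* e f" by (simp add: ess_chain_def)
  then show "ess_edge f" by (induction rule: rtranclp_induct) (use e ess_linked_def in auto)
qed

lemma ess_chain_subset_E: "ess_edge e \<Longrightarrow> ess_chain e \<subseteq> E"
  using ess_chain_ess_edge ess_edge_in_E by blast

lemma ess_chain_subset_sim_class: "ess_chain e \<subseteq> sim_class e"
proof
  fix f assume "f \<in> ess_chain e"
  then have "ess_linked\<^sup>*\<^sup>* e f" by (simp add: ess_chain_def)
  then have "linked\<^sup>*\<^sup>* e f"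
    by (induction rule: rtranclp_induct) (auto simp: ess_linked_def intro: rtranclp.rtrancl_into_rtrancl)
  then show "f \<in> sim_class e" by (simp add: sim_class_def)
qed

lemma ess_chain_ess_linked: "f \<in> ess_chain e \<Longrightarrow> ess_linked f h \<Longrightarrow> h \<in> ess_chain e"
  unfolding ess_chain_def by (auto intro: rtranclp.rtrancl_into_rtrancl)

lemma ess_chain_eq: "f \<in> ess_chain e \<Longrightarrow> ess_chain f = ess_chain e"
  unfolding ess_chain_def by (auto intro: rtranclp_trans ess_linked_rtrancl_sym)

lemma ess_chain_reach:
  assumes e: "ess_edge e" and a: "a \<in> ends e" and y: "y \<in> verts (ess_chain e)"
  shows "reach (ess_chain e) ends a y"
proof -
  obtain f where f: "f \<in> ess_chain e" "y \<in> ends f" using y unfolding verts_def by blast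
  show ?thesis
  proof (rule rtranclp_reach[of ess_linked e "ess_chain e"])
    show "\<forall>f\<in>ess_chain e. \<exists>u v. ends f = {u, v}" using ess_chain_subset_E[OF e] ends_doubleton by blast
  qed (use a f ess_linked_shared_vertex in \<open>auto simp: ess_chain_def\<close>)
qed

text \<open>The non-essential edges hanging off the non-essential vertices of a chain; together with
  the chain they form its class.\<close>

definition chain_pendants :: "'e \<Rightarrow> 'e set" where
  "chain_pendants e = {g\<in>E. \<not> ess_edge g \<and>
     (\<exists>x\<in>verts (ess_chain e). \<not> ess_vertex x \<and> (\<exists>y\<in>ends g. reach non_ess_edges ends x y))}"

lemma linked_chain_pendants:
  assumes e: "ess_edge e" and f: "f \<in> ess_chain e \<union> chain_pendants e" and r: "linked f h"
  shows "h \<in> ess_chain e \<union> chain_pendants e"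
proof -
  obtain x where x: "x \<in> ends f" "x \<in> ends h" "\<not> crit x f" "\<not> crit x h" "h \<in> E" "f \<in> E"
    using r linked_def by blast
  show ?thesis
  proof (cases "f \<in> ess_chain e")
    case True
    then have ef: "ess_edge f" using ess_chain_ess_edge[OF e] by blast
    then have nx: "\<not> ess_vertex x" using x critical_iff by blast
    show ?thesis
    proof (cases "ess_edge h")
      case True
      then show ?thesis using ess_chain_ess_linked \<open>f \<in> ess_chain e\<close> r ef ess_linked_def by blast
    next
      case False
      have "x \<in> verts (ess_chain e)" using \<open>f \<in> ess_chain e\<close> x(1) verts_def by blast
      then have "h \<in> chain_pendants e" unfolding chain_pendants_def
        using False x(2,5) nx reach_refl[of non_ess_edges ends x] by (auto intro!: bexI[of _ x])
      then show ?thesis by blast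
    qed
  next
    case False
    then obtain x0 y where x0: "x0 \<in> verts (ess_chain e)" "\<not> ess_vertex x0" "y \<in> ends f"
        "reach non_ess_edges ends x0 y" "\<not> ess_edge f"
      using f False unfolding chain_pendants_def by blast
    have "reach non_ess_edges ends y x" using reach_in_edge[of f non_ess_edges y x] x0 x by blast
    with x0(4) have rx: "reach non_ess_edges ends x0 x" by (rule reach_trans)
    show ?thesis
    proof (cases "ess_edge h")
      case True
      obtain f' where f': "f' \<in> ess_chain e" "x0 \<in> ends f'" using x0(1) verts_def by blast
      have ef': "ess_edge f'" using ess_chain_ess_edge[OF e f'(1)] .
      have "on_ess_edge x" using True x on_ess_edge_def by blast
      moreover have "on_ess_edge x0" using ef' f' on_ess_edge_def ess_edge_in_E by blast
      ultimately have "x = x0" using on_ess_edge_reach_non_ess_eq rx by blast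
      then have "ess_linked f' h" using ess_linkedI[OF ef' True f'(2)] x(2) x0(2) by blast
      then show ?thesis using ess_chain_ess_linked f'(1) by blast
    next
      case False
      then show ?thesis using x x0 rx unfolding chain_pendants_def by blast
    qed
  qed
qed

lemma ess_edges_sim_class:
  assumes e: "ess_edge e"
  shows "{f\<in>sim_class e. ess_edge f} = ess_chain e"
proof
  have "e \<in> ess_chain e \<union> chain_pendants e" using ess_chain_self by blast
  then have "sim_class e \<subseteq> ess_chain e \<union> chain_pendants e"
    using linked_chain_pendants[OF e] sim_class_subsetI by metis
  then show "{f\<in>sim_class e. ess_edge f} \<subseteq> ess_chain e" by (auto simp: chain_pendants_def)
  show "ess_chain e \<subseteq> {f\<in>sim_class e. ess_edge f}"
    using ess_chain_subset_sim_class ess_chain_ess_edge[OF e] by auto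
qed

lemma sim_class_ess_at_ess_vertex:
  assumes e: "ess_edge e" and v: "ess_vertex v" and f: "f \<in> sim_class e" "v \<in> ends f"
  shows "ess_edge f"
proof (rule ccontr)
  assume "\<not> ess_edge f"
  moreover have "f \<in> E" using sim_class_subset[OF ess_edge_in_E[OF e]] f by blast
  ultimately have "sim_class f \<subseteq> non_ess_edges" using sim_class_non_ess[OF v] f(2) by blast
  moreover have "e \<in> sim_class f" using sim_class_eq[OF f(1)] sim_class_self by blast
  ultimately show False using e by blast
qed

lemma ess_chain_at_non_ess_vertex:
  assumes e: "ess_edge e" and x: "x \<in> verts (ess_chain e)" "\<not> ess_vertex x" and h: "ess_edge h" "x \<in> ends h"
  shows "h \<in> ess_chain e"
proof -
  obtain f where f: "f \<in> ess_chain e" "x \<in> ends f" using x verts_def by blast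
  have "ess_linked f h" by (rule ess_linkedI[OF ess_chain_ess_edge[OF e f(1)] h(1) f(2) h(2) x(2)])
  then show ?thesis using ess_chain_ess_linked f(1) by blast
qed

lemma degree_ess_chain_non_ess_vertex:
  assumes e: "ess_edge e" and x: "x \<in> verts (ess_chain e)" "\<not> ess_vertex x"
  shows "degree (ess_chain e) ends x = 2"
proof -
  have "{f\<in>ess_chain e. x \<in> ends f} = {f\<in>E. ess_edge f \<and> x \<in> ends f}"
    and "{f\<in>ess_chain e. ends f = {x}} = {f\<in>E. ess_edge f \<and> ends f = {x}}"
    using ess_chain_at_non_ess_vertex[OF e x] ess_chain_ess_edge[OF e] ess_chain_subset_E[OF e] by auto
  then have deg: "degree (ess_chain e) ends x = ess_degree x" unfolding degree_def ess_degree_def by simp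
  obtain f where f: "f \<in> ess_chain e" "x \<in> ends f" using x verts_def by blast
  then have "on_ess_edge x" using ess_chain_ess_edge[OF e] ess_edge_in_E on_ess_edge_def by blast
  then have "ess_degree x \<ge> 2" by (rule on_ess_edge_ess_degree)
  moreover have "x \<in> V" using f ess_chain_subset_E[OF e] ends_subset_V by blast
  then have "ess_degree x \<le> 2" using ess_vertex_iff x(2) by auto
  ultimately show ?thesis using deg by simp
qed

text \<open>Non-essential vertices have degree 2 in the chain, so a cycle through one of them uses both
  chain edges there; as the chain is linked through such vertices, the cycle uses all of it.\<close>

lemma is_cycle_sim_class:
  assumes e: "ess_edge e" and c: "is_cycle (sim_class e) ends es vs"
  shows "set es = ess_chain e"
proof
  have sub: "set es \<subseteq> sim_class e" using is_cycle_edges_subset[OF c] .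
  have "ess_edge f" if "f \<in> set es" for f
    using is_cycle_ess_edge[OF c sim_class_subset[OF ess_edge_in_E[OF e]] that] .
  then show sD: "set es \<subseteq> ess_chain e" using sub ess_edges_sim_class[OF e] by blast
  obtain z where z: "z \<in> set es" using c by (cases es) (auto simp: is_cycle_def)
  then have zD: "z \<in> ess_chain e" using sD by blast
  have finD: "finite (ess_chain e)" using ess_chain_subset_E[OF e] finite_E finite_subset by blast
  show "ess_chain e \<subseteq> set es"
  proof
    fix f assume "f \<in> ess_chain e"
    then have "f \<in> ess_chain z" using ess_chain_eq[OF zD] by simp
    then have "ess_linked\<^sup>*\<^sup>* z f" by (simp add: ess_chain_def)
    then show "f \<in> set es"
    proof (induction rule: rtranclp_induct)
      case (step f h)
      obtain x where x: "x \<in> ends f" "x \<in> ends h" "\<not> ess_vertex x"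
        using ess_linked_shared_vertex[OF step(2)] by blast
      have "x \<in> set vs" using is_cycle_ends_subset[OF c step(3)] x(1) by blast
      then have d1: "degree (set es) ends x \<ge> 2" using is_cycle_degree_ge_2[OF c] by blast
      have "x \<in> verts (ess_chain e)" using step(3) sD x(1) unfolding verts_def by blast
      then have d2: "degree (ess_chain e) ends x = 2" using degree_ess_chain_non_ess_vertex[OF e] x(3) by blast
      have hD: "h \<in> ess_chain e" using ess_chain_ess_linked[OF _ step(2)] step(3) sD by blast
      show ?case
      proof (rule ccontr)
        assume "h \<notin> set es"
        then have "{g\<in>set es. x \<in> ends g} \<subset> {g\<in>ess_chain e. x \<in> ends g}" using sD hD x(2) by blast
        then have "card {g\<in>set es. x \<in> ends g} < card {g\<in>ess_chain e. x \<in> ends g}"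
          using finD by (intro psubset_card_mono) auto
        moreover have "card {g\<in>set es. ends g = {x}} \<le> card {g\<in>ess_chain e. ends g = {x}}"
          using finD sD by (intro card_mono) auto
        ultimately have "degree (set es) ends x < degree (ess_chain e) ends x" unfolding degree_def by simp
        then show False using d1 d2 by simp
      qed
    qed (use z in simp)
  qed
qed


definition critical_incidences :: "'e \<Rightarrow> ('v \<times> 'e) set" where
  "critical_incidences e = {(v, f). f \<in> ess_chain e \<and> v \<in> ends f \<and> ess_vertex v}"

text \<open>Splitting every essential vertex into one private copy per incident edge of a chain yields a
  connected graph of maximum degree 2 whose vertices of degree 1 are exactly these copies.\<close>

definition split_end :: "'e \<Rightarrow> 'v \<Rightarrow> 'v \<times> 'e option" where
  "split_end f x = (if ess_vertex x then (x, Some f) else (x, None))"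

definition split_ends :: "'e \<Rightarrow> ('v \<times> 'e option) set" where
  "split_ends f = split_end f ` ends f"

definition split_verts :: "'e \<Rightarrow> ('v \<times> 'e option) set" where
  "split_verts e = \<Union>(split_ends ` ess_chain e)"

lemma split_ends_doubleton: "f \<in> E \<Longrightarrow> \<exists>u v. split_ends f = {u, v}"
proof -
  assume "f \<in> E"
  then obtain u v where "ends f = {u, v}" using ends_doubleton by blast
  then have "split_ends f = {split_end f u, split_end f v}" unfolding split_ends_def by auto
  then show ?thesis by blast
qed

lemma finite_split_verts: "ess_edge e \<Longrightarrow> finite (split_verts e)"
proof -
  assume e: "ess_edge e"
  have "finite (ends f)" if "f \<in> ess_chain e" for f
    using that ess_chain_subset_E[OF e] ends_subset_V finite_V by (meson finite_subset subsetD)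
  moreover have "finite (ess_chain e)" using ess_chain_subset_E[OF e] finite_E finite_subset by blast
  ultimately show ?thesis unfolding split_verts_def split_ends_def by blast
qed

lemma split_verts_connected:
  assumes e: "ess_edge e" and a: "a \<in> ends e" and w: "w \<in> split_verts e"
  shows "reach (ess_chain e) split_ends (split_end e a) w"
proof -
  obtain f where f: "f \<in> ess_chain e" "w \<in> split_ends f" using w unfolding split_verts_def by blast
  show ?thesis
  proof (rule rtranclp_reach[of ess_linked e "ess_chain e"])
    show "\<forall>f h. ess_linked f h \<longrightarrow> (\<exists>x. x \<in> split_ends f \<and> x \<in> split_ends h)"
    proof (intro allI impI)
      fix f h assume "ess_linked f h"
      then obtain x where x: "x \<in> ends f" "x \<in> ends h" "\<not> ess_vertex x"
        using ess_linked_shared_vertex by blast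
      then have "split_end f x = split_end h x" by (simp add: split_end_def)
      then show "\<exists>x. x \<in> split_ends f \<and> x \<in> split_ends h" using x unfolding split_ends_def by blast
    qed
    show "\<forall>f\<in>ess_chain e. \<exists>u v. split_ends f = {u, v}"
      using split_ends_doubleton ess_chain_subset_E[OF e] by blast
  qed (use f a in \<open>auto simp: ess_chain_def split_ends_def\<close>)
qed

lemma degree_split_inner:
  assumes e: "ess_edge e" and x: "x \<in> verts (ess_chain e)" "\<not> ess_vertex x"
  shows "degree (ess_chain e) split_ends (x, None) = 2"
proof -
  have "{f\<in>ess_chain e. (x, None) \<in> split_ends f} = {f\<in>ess_chain e. x \<in> ends f}"
    using x by (auto simp: split_ends_def split_end_def image_iff)
  moreover have "{f\<in>ess_chain e. split_ends f = {(x, None)}} = {f\<in>ess_chain e. ends f = {x}}"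
  proof (intro Collect_cong conj_cong refl)
    fix f assume "f \<in> ess_chain e"
    then obtain u v where uv: "ends f = {u, v}" using ends_doubleton ess_chain_subset_E[OF e] by blast
    then have "split_ends f = {split_end f u, split_end f v}" by (simp add: split_ends_def)
    then show "(split_ends f = {(x, None)}) = (ends f = {x})"
      using uv x(2) by (auto simp: split_end_def doubleton_eq_iff split: if_splits)
  qed
  ultimately have "degree (ess_chain e) split_ends (x, None) = degree (ess_chain e) ends x"
    unfolding degree_def by simp
  then show ?thesis using degree_ess_chain_non_ess_vertex[OF e x] by simp
qed

lemma degree_split_copy:
  assumes no_loop: "\<forall>f\<in>ess_chain e. \<forall>v. ends f = {v} \<longrightarrow> \<not> ess_vertex v"
    and p: "(v, f) \<in> critical_incidences e"
  shows "degree (ess_chain e) split_ends (v, Some f) = 1"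
proof -
  have vf: "f \<in> ess_chain e" "v \<in> ends f" "ess_vertex v" using p by (auto simp: critical_incidences_def)
  have s1: "{f'\<in>ess_chain e. (v, Some f) \<in> split_ends f'} = {f}"
    using vf by (auto simp: split_ends_def split_end_def image_iff split: if_splits)
  have s2: "{f'\<in>ess_chain e. split_ends f' = {(v, Some f)}} = {}"
  proof (rule ccontr)
    assume "{f'\<in>ess_chain e. split_ends f' = {(v, Some f)}} \<noteq> {}"
    then obtain f' where f': "f' \<in> ess_chain e" "split_ends f' = {(v, Some f)}" by auto
    then have "\<forall>y\<in>ends f'. split_end f' y = (v, Some f)" by (auto simp: split_ends_def)
    then have "\<forall>y\<in>ends f'. y = v \<and> f' = f" by (auto simp: split_end_def split: if_splits)
    moreover have "ends f' \<noteq> {}" using f' by (auto simp: split_ends_def)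
    ultimately have "ends f' = {v}" by auto
    then show False using no_loop f'(1) vf(3) by blast
  qed
  show ?thesis unfolding degree_def s1 s2 by simp
qed

lemma split_verts_cases:
  "w \<in> split_verts e \<Longrightarrow> (\<exists>x. w = (x, None) \<and> x \<in> verts (ess_chain e) \<and> \<not> ess_vertex x) \<or>
     (\<exists>v f. w = (v, Some f) \<and> (v, f) \<in> critical_incidences e)"
  unfolding split_verts_def split_ends_def split_end_def critical_incidences_def verts_def by auto

lemma ess_chain_critical_incidences:
  assumes e: "ess_edge e" and no_loop: "\<forall>f\<in>ess_chain e. \<forall>v. ends f = {v} \<longrightarrow> \<not> ess_vertex v"
  shows "card (critical_incidences e) \<le> 2" and "even (card (critical_incidences e))"
proof -
  define copy where "copy = (\<lambda>(v::'v, f::'e). (v, Some f))"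
  have finD: "finite (ess_chain e)" using ess_chain_subset_E[OF e] finite_E finite_subset by blast
  have sub: "\<forall>f\<in>ess_chain e. split_ends f \<subseteq> split_verts e \<and> (\<exists>u v. split_ends f = {u, v})"
    using split_ends_doubleton ess_chain_subset_E[OF e] unfolding split_verts_def by blast
  obtain a b where ab: "ends e = {a, b}" using ends_doubleton ess_edge_in_E[OF e] by blast
  then have a: "a \<in> ends e" by simp
  have aW: "split_end e a \<in> split_verts e"
    using a ess_chain_self unfolding split_verts_def split_ends_def by blast
  have conn: "\<forall>w\<in>split_verts e. reach (ess_chain e) split_ends (split_end e a) w"
    using split_verts_connected[OF e a] by blast
  have deg: "\<forall>w\<in>split_verts e. degree (ess_chain e) split_ends w = 1 \<or> degree (ess_chain e) split_ends w = 2"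
    using split_verts_cases degree_split_inner[OF e] degree_split_copy[OF no_loop] by blast
  have "{w\<in>split_verts e. degree (ess_chain e) split_ends w = 1} = copy ` critical_incidences e"
  proof
    show "{w\<in>split_verts e. degree (ess_chain e) split_ends w = 1} \<subseteq> copy ` critical_incidences e"
      using split_verts_cases degree_split_inner[OF e] by (fastforce simp: copy_def)
    have "copy p \<in> split_verts e" if "p \<in> critical_incidences e" for p
      using that unfolding split_verts_def split_ends_def split_end_def copy_def critical_incidences_def
      by force
    then show "copy ` critical_incidences e \<subseteq> {w\<in>split_verts e. degree (ess_chain e) split_ends w = 1}"
      using degree_split_copy[OF no_loop] by (auto simp: copy_def)
  qed
  moreover have "card (copy ` critical_incidences e) = card (critical_incidences e)"
    by (rule card_image) (auto simp: inj_on_def copy_def)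
  moreover note connected_max_degree_2[OF finD finite_split_verts[OF e] sub aW conn deg]
  ultimately show "card (critical_incidences e) \<le> 2" and "even (card (critical_incidences e))"
    by simp_all
qed

lemma ess_chain_has_cycle:
  assumes e: "ess_edge e" and deg: "\<forall>x\<in>verts (ess_chain e). degree (ess_chain e) ends x = 2"
  shows "\<exists>es vs. is_cycle (ess_chain e) ends es vs"
proof -
  let ?D = "ess_chain e"
  have DE: "?D \<subseteq> E" using ess_chain_subset_E[OF e] .
  have finD: "finite ?D" using DE finite_E finite_subset by blast
  have finW: "finite (verts ?D)" using verts_subset[OF DE] finite_V finite_subset by blast
  have sub: "\<forall>f\<in>?D. ends f \<subseteq> verts ?D \<and> (\<exists>u v. ends f = {u, v})"
    using DE ends_doubleton unfolding verts_def by blast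
  obtain a b where ab: "ends e = {a, b}" using ends_doubleton ess_edge_in_E[OF e] by blast
  then have a: "a \<in> ends e" by simp
  then have "a \<in> verts ?D" using ess_chain_self unfolding verts_def by blast
  moreover have "\<forall>y\<in>verts ?D. reach ?D ends a y" using ess_chain_reach[OF e a] by blast
  moreover have "{x\<in>verts ?D. degree ?D ends x = 1} = {}" using deg by auto
  ultimately show ?thesis using connected_max_degree_2(3)[OF finD finW sub] deg by auto
qed

end

section \<open>Ferns\<close>

definition quot_edge :: "('e \<Rightarrow> 'v set) \<Rightarrow> ('v, 'e) bmg \<Rightarrow> bool" where
  "quot_edge ends S \<longleftrightarrow> (is_fern ends S \<and> is_tree ends S \<and> card (bdry S) = 2) \<or>
                        (is_fern ends S \<and> is_unicyclic ends S \<and> card (bdry S) = 1)"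

definition quot_incidences :: "('e \<Rightarrow> 'v set) \<Rightarrow> ('v, 'e) bmg \<Rightarrow> 'v \<Rightarrow> nat" where
  "quot_incidences ends S v =
     (if quot_edge ends S then (if v \<in> bdry S then 1 else 0) + (if bdry S = {v} then 1 else 0) else 0)"

lemma quot_edges_eq: "quot_edges ends HF = {S\<in>HF. quot_edge ends S}"
  by (simp add: quot_edges_def quot_edge_def)

lemma degree_quot_edges:
  "finite HF \<Longrightarrow> degree (quot_edges ends HF) bdry v = (\<Sum>S\<in>HF. quot_incidences ends S v)"
  by (simp add: quot_edges_eq degree_eq_sum sum.inter_filter quot_incidences_def)

lemma tree_not_unicyclic: "is_tree ends S \<Longrightarrow> \<not> is_unicyclic ends S"
  unfolding is_tree_def is_unicyclic_def acyclic_mg_def cycle_edge_sets_def by auto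

lemma is_unicyclicI:
  assumes "connected_mg (bverts S) (bedges S) ends" "is_cycle (bedges S) ends es vs"
    "\<And>es vs. is_cycle (bedges S) ends es vs \<Longrightarrow> set es = D"
  shows "is_unicyclic ends S"
proof -
  have "cycle_edge_sets (bedges S) ends = {D}" unfolding cycle_edge_sets_def using assms(2,3) by blast
  then show ?thesis using assms(1) unfolding is_unicyclic_def by simp
qed

lemma fern_tree_le_1:
  assumes "is_tree ends S" "card (bdry S) \<le> 1"
  shows "is_fern ends S" "quot_incidences ends S v = 0"
proof -
  show "is_fern ends S" using assms unfolding is_fern_def by auto
  have "\<not> is_unicyclic ends S" using assms(1) by (rule tree_not_unicyclic)
  then show "quot_incidences ends S v = 0"
    using assms(2) by (simp add: quot_incidences_def quot_edge_def)
qed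

lemma fern_tree_2:
  assumes "u \<noteq> w" "bdry S = {u, w}" "is_tree ends S"
    "degree (bedges S) ends u = 1" "degree (bedges S) ends w = 1"
  shows "is_fern ends S" "quot_incidences ends S v = (if v = u \<or> v = w then 1 else 0)"
proof -
  show fern: "is_fern ends S" using assms unfolding is_fern_def by auto
  then have "quot_edge ends S" using assms by (simp add: quot_edge_def)
  then show "quot_incidences ends S v = (if v = u \<or> v = w then 1 else 0)"
    using assms(1,2) by (auto simp: quot_incidences_def)
qed

lemma fern_cyclic_1:
  assumes "bdry S = {w}" "is_unicyclic ends S" "degree (bedges S) ends w = 2"
    "\<exists>es vs. is_cycle (bedges S) ends es vs \<and> w \<in> set vs"
  shows "is_fern ends S" "quot_incidences ends S v = (if v = w then 2 else 0)"
proof -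
  show fern: "is_fern ends S" using assms tree_not_unicyclic unfolding is_fern_def by auto
  then have "quot_edge ends S" using assms by (simp add: quot_edge_def)
  then show "quot_incidences ends S v = (if v = w then 2 else 0)"
    using assms(1) by (auto simp: quot_incidences_def)
qed

lemma fern_cyclic_0:
  assumes "bdry S = {}" "is_unicyclic ends S"
  shows "is_fern ends S" "quot_incidences ends S v = 0"
  using assms by (auto simp: is_fern_def quot_incidences_def quot_edge_def)

context mgraph
begin

abbreviation piece :: "'e set \<Rightarrow> ('v, 'e) bmg" where
  "piece C \<equiv> induced_bmg E ends C"

lemma piece_simps:
  "bverts (piece C) = verts C" "bedges (piece C) = C"
  "bdry (piece C) = {v \<in> verts C. \<exists>g\<in>E - C. v \<in> ends g}"
  by (simp_all add: induced_bmg_def bverts_def bedges_def bdry_def verts_def)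

definition ess_degree_in :: "'e set \<Rightarrow> 'v \<Rightarrow> nat" where
  "ess_degree_in C v = card {f\<in>C. ess_edge f \<and> v \<in> ends f} + card {f\<in>C. ess_edge f \<and> ends f = {v}}"

lemma sim_class_without_ess_edge:
  assumes e0: "e0 \<in> E" and no_ess: "\<forall>f\<in>sim_class e0. \<not> ess_edge f"
  shows "bdry (piece (sim_class e0)) = {v\<in>verts (sim_class e0). ess_vertex v}"
    and "is_fern ends (piece (sim_class e0))"
    and "quot_incidences ends (piece (sim_class e0)) v = ess_degree_in (sim_class e0) v"
proof -
  let ?C = "sim_class e0"
  show bd: "bdry (piece ?C) = {v\<in>verts ?C. ess_vertex v}"
  proof
    show "bdry (piece ?C) \<subseteq> {v\<in>verts ?C. ess_vertex v}" using boundary_ess_vertex[OF e0] by (auto simp: piece_simps)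
    show "{v\<in>verts ?C. ess_vertex v} \<subseteq> bdry (piece ?C)"
    proof
      fix v assume v: "v \<in> {v\<in>verts ?C. ess_vertex v}"
      then obtain h where h: "h \<in> E" "ess_edge h" "v \<in> ends h" using ess_vertex_on_ess_edge on_ess_edge_def by blast
      then have "h \<notin> ?C" using no_ess by blast
      then show "v \<in> bdry (piece ?C)" using v h by (auto simp: piece_simps)
    qed
  qed
  have conn: "connected_mg (verts ?C) ?C ends" using sim_class_connected[OF e0] .
  have "acyclic_mg ?C ends"
    unfolding acyclic_mg_def
  proof
    assume "\<exists>es vs. is_cycle ?C ends es vs"
    then obtain es vs where c: "is_cycle ?C ends es vs" by blast
    then obtain f where "f \<in> set es" by (cases es) (auto simp: is_cycle_def)
    then show False using is_cycle_ess_edge[OF c sim_class_subset[OF e0]] is_cycle_edges_subset[OF c] no_ess by blast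
  qed
  then have tree: "is_tree ends (piece ?C)" using conn by (simp add: is_tree_def piece_simps)
  have CN: "?C \<subseteq> non_ess_edges" using no_ess sim_class_subset[OF e0] by blast
  have "a1 = a2" if a: "a1 \<in> bdry (piece ?C)" "a2 \<in> bdry (piece ?C)" for a1 a2
  proof -
    have av: "a1 \<in> verts ?C" "a2 \<in> verts ?C" "ess_vertex a1" "ess_vertex a2" using a bd by auto
    have "reach ?C ends a1 a2" using conn av unfolding connected_mg_def by blast
    then have "reach non_ess_edges ends a1 a2" using CN by (rule reach_mono)
    then show "a1 = a2" using on_ess_edge_reach_non_ess_eq ess_vertex_on_ess_edge av by blast
  qed
  moreover have "finite (bdry (piece ?C))"
    using verts_subset[OF sim_class_subset[OF e0]] finite_V unfolding bd by (auto intro: finite_subset)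
  ultimately have "card (bdry (piece ?C)) \<le> 1" by (simp add: card_le_Suc0_iff_eq)
  note fern = fern_tree_le_1[OF tree this]
  then show "is_fern ends (piece ?C)" by blast
  have e1: "{f\<in>?C. ess_edge f \<and> v \<in> ends f} = {}" and e2: "{f\<in>?C. ess_edge f \<and> ends f = {v}} = {}"
    using no_ess by auto
  show "quot_incidences ends (piece ?C) v = ess_degree_in ?C v"
    unfolding ess_degree_in_def e1 e2 using fern by simp
qed

lemma sim_class_ess_loop:
  assumes e: "ess_edge e" and f: "f \<in> ess_chain e" "ends f = {w}" "ess_vertex w"
  shows "bdry (piece (sim_class e)) = {v\<in>verts (sim_class e). ess_vertex v}"
    and "is_fern ends (piece (sim_class e))"
    and "quot_incidences ends (piece (sim_class e)) v = ess_degree_in (sim_class e) v"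
proof -
  have ef: "ess_edge f" using ess_chain_ess_edge[OF e f(1)] .
  have fC: "f \<in> sim_class e" using ess_chain_subset_sim_class f(1) by blast
  have "sim_class f \<subseteq> {f}"
  proof (rule sim_class_subsetI)
    fix f' h assume "f' \<in> {f}" "linked f' h"
    then obtain x where "x \<in> ends f" "\<not> crit x f" using linked_def by blast
    then show "h \<in> {f}" using f ef critical_iff by auto
  qed simp
  then have C: "sim_class e = {f}" using sim_class_eq[OF fC] fC by blast
  then have VC: "verts (sim_class e) = {w}" using f by (simp add: verts_def)
  obtain g where g: "g \<in> E" "ess_edge g" "w \<in> ends g" "g \<noteq> f"
  proof (rule ccontr)
    assume "\<not> thesis"
    then have s1: "{g\<in>E. ess_edge g \<and> w \<in> ends g} \<subseteq> {f}" using that by blast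
    then have s2: "{g\<in>E. ess_edge g \<and> ends g = {w}} \<subseteq> {f}" by auto
    have "card {g\<in>E. ess_edge g \<and> w \<in> ends g} \<le> 1" using card_mono[OF _ s1] by simp
    moreover have "card {g\<in>E. ess_edge g \<and> ends g = {w}} \<le> 1" using card_mono[OF _ s2] by simp
    ultimately have "ess_degree w \<le> 2" unfolding ess_degree_def by simp
    then show False using f(3) ess_vertex_iff by simp
  qed
  have bd: "bdry (piece (sim_class e)) = {w}" using g C VC by (auto simp: piece_simps)
  then show "bdry (piece (sim_class e)) = {v\<in>verts (sim_class e). ess_vertex v}" using VC f by auto
  have cyc: "is_cycle (sim_class e) ends [f] [w]" using f C ess_edge_in_E[OF ef] by (simp add: is_cycle_def)
  have uni: "is_unicyclic ends (piece (sim_class e))"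
  proof (rule is_unicyclicI)
    show "connected_mg (bverts (piece (sim_class e))) (bedges (piece (sim_class e))) ends"
      using sim_class_connected[OF ess_edge_in_E[OF e]] by (simp add: piece_simps)
    show "is_cycle (bedges (piece (sim_class e))) ends [f] [w]" using cyc by (simp add: piece_simps)
    fix es vs assume "is_cycle (bedges (piece (sim_class e))) ends es vs"
    then have "set es \<subseteq> {f}" "es \<noteq> []" using is_cycle_edges_subset C by (auto simp: piece_simps is_cycle_def)
    then show "set es = {f}" by (cases es) auto
  qed
  have "{g\<in>sim_class e. w \<in> ends g} = {f}" "{g\<in>sim_class e. ends g = {w}} = {f}" using C f by auto
  then have deg: "degree (bedges (piece (sim_class e))) ends w = 2" unfolding degree_def piece_simps by simp
  have "\<exists>es vs. is_cycle (bedges (piece (sim_class e))) ends es vs \<and> w \<in> set vs"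
    using cyc by (force simp: piece_simps)
  note fern = fern_cyclic_1[OF bd uni deg this]
  then show "is_fern ends (piece (sim_class e))" by blast
  have e1: "{g\<in>sim_class e. ess_edge g \<and> v \<in> ends g} = (if v = w then {f} else {})"
    and e2: "{g\<in>sim_class e. ess_edge g \<and> ends g = {v}} = (if v = w then {f} else {})"
    using C f ef by auto
  show "quot_incidences ends (piece (sim_class e)) v = ess_degree_in (sim_class e) v"
    unfolding ess_degree_in_def e1 e2 using fern by simp
qed


context
  fixes e :: 'e
  assumes e: "ess_edge e"
    and no_loop: "\<forall>f\<in>ess_chain e. \<forall>v. ends f = {v} \<longrightarrow> \<not> ess_vertex v"
begin

lemma sim_class_edges_at_ess_vertex:
  assumes v: "ess_vertex v"
  shows "{f\<in>sim_class e. v \<in> ends f} = {f\<in>ess_chain e. v \<in> ends f}"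
    and "{f\<in>sim_class e. ends f = {v}} = {}"
proof -
  show at: "{f\<in>sim_class e. v \<in> ends f} = {f\<in>ess_chain e. v \<in> ends f}"
    using sim_class_ess_at_ess_vertex[OF e v] ess_edges_sim_class[OF e] ess_chain_subset_sim_class
    by blast
  show "{f\<in>sim_class e. ends f = {v}} = {}"
    using at no_loop v by auto
qed

lemma degree_ess_chain_ess_vertex:
  assumes "ess_vertex v"
  shows "degree (ess_chain e) ends v = card {f\<in>ess_chain e. v \<in> ends f}"
proof -
  have loops: "{f\<in>ess_chain e. ends f = {v}} = {}" using no_loop assms by auto
  show ?thesis unfolding degree_def loops by simp
qed

lemma degree_sim_class_ess_vertex:
  assumes v: "ess_vertex v"
  shows "degree (sim_class e) ends v = degree (ess_chain e) ends v"
    and "ess_degree_in (sim_class e) v = degree (ess_chain e) ends v"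
proof -
  note at = sim_class_edges_at_ess_vertex[OF v]
  show "degree (sim_class e) ends v = degree (ess_chain e) ends v"
    unfolding degree_ess_chain_ess_vertex[OF v] unfolding degree_def at by simp
  have e1: "{f\<in>sim_class e. ess_edge f \<and> v \<in> ends f} = {f\<in>ess_chain e. v \<in> ends f}"
    using at ess_chain_ess_edge[OF e] by blast
  have e2: "{f\<in>sim_class e. ess_edge f \<and> ends f = {v}} = {}" using at(2) by blast
  show "ess_degree_in (sim_class e) v = degree (ess_chain e) ends v"
    unfolding degree_ess_chain_ess_vertex[OF v] ess_degree_in_def e1 e2 by simp
qed

lemma finite_ess_chain: "finite (ess_chain e)"
  using ess_chain_subset_E[OF e] finite_E finite_subset by blast

lemma finite_verts_sim_class: "finite (verts (sim_class e))"
  using verts_subset[OF sim_class_subset[OF ess_edge_in_E[OF e]]] finite_V finite_subset by blast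

lemma verts_ess_chain_subset: "verts (ess_chain e) \<subseteq> verts (sim_class e)"
  using ess_chain_subset_sim_class by (auto simp: verts_def)

text \<open>The sum counts the critical incidences of the chain.\<close>

lemma chain_degrees_sum:
  defines "B \<equiv> {v\<in>verts (sim_class e). ess_vertex v}"
  shows "(\<Sum>v\<in>B. degree (ess_chain e) ends v) \<le> 2"
    and "even (\<Sum>v\<in>B. degree (ess_chain e) ends v)"
proof -
  have "critical_incidences e = Sigma B (\<lambda>v. {f\<in>ess_chain e. v \<in> ends f})"
    using ess_chain_subset_sim_class by (auto simp: B_def verts_def critical_incidences_def)
  moreover have "card (Sigma B (\<lambda>v. {f\<in>ess_chain e. v \<in> ends f})) = (\<Sum>v\<in>B. degree (ess_chain e) ends v)"
    using finite_verts_sim_class finite_ess_chain degree_ess_chain_ess_vertex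
    by (subst card_SigmaI) (auto simp: B_def)
  ultimately show "(\<Sum>v\<in>B. degree (ess_chain e) ends v) \<le> 2"
    and "even (\<Sum>v\<in>B. degree (ess_chain e) ends v)"
    using ess_chain_critical_incidences[OF e no_loop] by simp_all
qed

lemma boundary_sim_class:
  "bdry (piece (sim_class e)) = {v\<in>verts (sim_class e). ess_vertex v}"
proof
  show "bdry (piece (sim_class e)) \<subseteq> {v\<in>verts (sim_class e). ess_vertex v}"
    using boundary_ess_vertex[OF ess_edge_in_E[OF e]] by (auto simp: piece_simps)
  show "{v\<in>verts (sim_class e). ess_vertex v} \<subseteq> bdry (piece (sim_class e))"
  proof
    fix v assume v: "v \<in> {v\<in>verts (sim_class e). ess_vertex v}"
    have "\<exists>g\<in>E - sim_class e. v \<in> ends g"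
    proof (rule ccontr)
      assume "\<not> ?thesis"
      then have "{g\<in>E. ess_edge g \<and> v \<in> ends g} \<subseteq> {f\<in>ess_chain e. v \<in> ends f}"
        and "{g\<in>E. ess_edge g \<and> ends g = {v}} \<subseteq> {f\<in>sim_class e. ends f = {v}}"
        using sim_class_edges_at_ess_vertex v by auto
      then have "card {g\<in>E. ess_edge g \<and> v \<in> ends g} \<le> card {f\<in>ess_chain e. v \<in> ends f}"
        and loops: "{g\<in>E. ess_edge g \<and> ends g = {v}} = {}"
        using finite_ess_chain sim_class_edges_at_ess_vertex(2) v by (auto intro: card_mono)
      then have "ess_degree v \<le> degree (ess_chain e) ends v"
        unfolding ess_degree_def loops using degree_ess_chain_ess_vertex v by simp
      also have "\<dots> \<le> (\<Sum>v\<in>{v\<in>verts (sim_class e). ess_vertex v}. degree (ess_chain e) ends v)"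
        using v finite_verts_sim_class by (intro member_le_sum) auto
      also have "\<dots> \<le> 2" by (rule chain_degrees_sum(1))
      finally show False using v ess_vertex_iff by simp
    qed
    then show "v \<in> bdry (piece (sim_class e))" using v by (simp add: piece_simps)
  qed
qed

lemma boundary_ess_chain:
  assumes "v \<in> bdry (piece (sim_class e))"
  shows "v \<in> verts (ess_chain e)" and "degree (ess_chain e) ends v \<ge> 1"
proof -
  have v: "v \<in> verts (sim_class e)" "ess_vertex v" using assms boundary_sim_class by auto
  then obtain f where "f \<in> sim_class e" "v \<in> ends f" by (auto simp: verts_def)
  then have f: "f \<in> {f\<in>ess_chain e. v \<in> ends f}" using sim_class_edges_at_ess_vertex(1)[OF v(2)] by blast
  then show "v \<in> verts (ess_chain e)" by (auto simp: verts_def)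
  show "degree (ess_chain e) ends v \<ge> 1"
    using f finite_ess_chain degree_ess_chain_ess_vertex[OF v(2)] by (auto simp: Suc_le_eq card_gt_0_iff)
qed

lemma degree_ess_chain_outside_boundary:
  assumes "ess_vertex v" "v \<notin> bdry (piece (sim_class e))"
  shows "degree (ess_chain e) ends v = 0"
proof -
  have none: "{f\<in>ess_chain e. v \<in> ends f} = {}"
    using assms verts_ess_chain_subset boundary_sim_class by (auto simp: verts_def)
  show ?thesis unfolding degree_ess_chain_ess_vertex[OF assms(1)] none by simp
qed

lemma sim_class_unicyclic:
  assumes "is_cycle (sim_class e) ends es vs"
  shows "is_unicyclic ends (piece (sim_class e))"
  using assms is_cycle_sim_class[OF e] sim_class_connected[OF ess_edge_in_E[OF e]]
  by (intro is_unicyclicI[where D = "ess_chain e"]) (auto simp: piece_simps)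

lemma sim_class_has_cycle:
  assumes "\<forall>x\<in>verts (ess_chain e). degree (ess_chain e) ends x = 2"
  obtains es vs where "is_cycle (sim_class e) ends es vs" "set es = ess_chain e"
proof -
  obtain es vs where "is_cycle (ess_chain e) ends es vs" using ess_chain_has_cycle[OF e assms] by blast
  then have c: "is_cycle (sim_class e) ends es vs"
    using ess_chain_subset_sim_class by (metis is_cycle_edges_subset is_cycle_mono subset_trans)
  then show thesis using that is_cycle_sim_class[OF e c] by blast
qed

lemma boundary_sim_class_cases:
  obtains "bdry (piece (sim_class e)) = {}"
  | w where "bdry (piece (sim_class e)) = {w}" "degree (ess_chain e) ends w = 2"
  | u w where "u \<noteq> w" "bdry (piece (sim_class e)) = {u, w}"
      "degree (ess_chain e) ends u = 1" "degree (ess_chain e) ends w = 1"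
proof (cases "bdry (piece (sim_class e)) = {}")
  case False
  let ?B = "bdry (piece (sim_class e))"
  let ?s = "\<Sum>v\<in>?B. degree (ess_chain e) ends v"
  have sum: "?s \<le> 2" "even ?s" using chain_degrees_sum boundary_sim_class by simp_all
  have finB: "finite ?B" using finite_verts_sim_class boundary_sim_class by simp
  have "card ?B = (\<Sum>v\<in>?B. 1)" by simp
  also have "\<dots> \<le> ?s" using boundary_ess_chain(2) by (rule sum_mono)
  finally have "card ?B \<le> ?s" .
  moreover have "?s \<noteq> 1" using sum(2) by auto
  moreover have "card ?B \<noteq> 0" using False finB by simp
  ultimately have "(card ?B = 1 \<or> card ?B = 2) \<and> ?s = 2" using sum(1) by linarith
  then show thesis
  proof (elim conjE disjE)
    assume "card ?B = 1" "?s = 2"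
    then show thesis using that(2) by (auto simp: card_1_singleton_iff)
  next
    assume "card ?B = 2" "?s = 2"
    then obtain u w where uw: "u \<noteq> w" "?B = {u, w}" by (auto simp: card_2_iff)
    then have "degree (ess_chain e) ends u + degree (ess_chain e) ends w = 2"
      "degree (ess_chain e) ends u \<ge> 1" "degree (ess_chain e) ends w \<ge> 1"
      using \<open>?s = 2\<close> boundary_ess_chain(2) by auto
    then show thesis using that(3) uw by simp
  qed
qed

lemma sim_class_without_boundary:
  assumes bd: "bdry (piece (sim_class e)) = {}"
  shows "is_fern ends (piece (sim_class e))"
    and "ess_vertex v \<Longrightarrow> quot_incidences ends (piece (sim_class e)) v = ess_degree_in (sim_class e) v"
proof -
  have "degree (ess_chain e) ends x = 2" if "x \<in> verts (ess_chain e)" for x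
    using degree_ess_chain_non_ess_vertex[OF e] that verts_ess_chain_subset bd boundary_sim_class
    by blast
  then obtain es vs where "is_cycle (sim_class e) ends es vs" using sim_class_has_cycle by blast
  note fern = fern_cyclic_0[OF bd sim_class_unicyclic[OF this]]
  then show "is_fern ends (piece (sim_class e))" by blast
  assume "ess_vertex v"
  then show "quot_incidences ends (piece (sim_class e)) v = ess_degree_in (sim_class e) v"
    using fern degree_sim_class_ess_vertex(2) degree_ess_chain_outside_boundary bd by simp
qed

lemma sim_class_one_boundary:
  assumes bd: "bdry (piece (sim_class e)) = {w}" and dw: "degree (ess_chain e) ends w = 2"
  shows "is_fern ends (piece (sim_class e))"
    and "ess_vertex v \<Longrightarrow> quot_incidences ends (piece (sim_class e)) v = ess_degree_in (sim_class e) v"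
proof -
  have w: "ess_vertex w" "w \<in> verts (ess_chain e)" using bd boundary_sim_class boundary_ess_chain(1) by auto
  have "degree (ess_chain e) ends x = 2" if x: "x \<in> verts (ess_chain e)" for x
  proof (cases "ess_vertex x")
    case True
    then have "x = w" using x verts_ess_chain_subset bd boundary_sim_class by blast
    then show ?thesis using dw by simp
  qed (use degree_ess_chain_non_ess_vertex[OF e] x in blast)
  then obtain es vs where c: "is_cycle (sim_class e) ends es vs" "set es = ess_chain e"
    using sim_class_has_cycle by blast
  then have "w \<in> set vs" using w(2) is_cycle_ends_subset[OF c(1)] by (auto simp: verts_def)
  then have on_cycle: "\<exists>es vs. is_cycle (sim_class e) ends es vs \<and> w \<in> set vs" using c(1) by blast
  have "degree (sim_class e) ends w = 2" using degree_sim_class_ess_vertex(1)[OF w(1)] dw by simp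
  note fern = fern_cyclic_1[OF bd sim_class_unicyclic[OF c(1)], unfolded piece_simps, OF this on_cycle]
  then show "is_fern ends (piece (sim_class e))" by blast
  assume v: "ess_vertex v"
  have "ess_degree_in (sim_class e) v = (if v = w then 2 else 0)"
    using degree_sim_class_ess_vertex(2)[OF v] degree_ess_chain_outside_boundary[OF v] bd dw
    by (cases "v = w") simp_all
  then show "quot_incidences ends (piece (sim_class e)) v = ess_degree_in (sim_class e) v"
    using fern by simp
qed

lemma sim_class_two_boundary:
  assumes uw: "u \<noteq> w" and bd: "bdry (piece (sim_class e)) = {u, w}"
    and du: "degree (ess_chain e) ends u = 1" and dw: "degree (ess_chain e) ends w = 1"
  shows "is_fern ends (piece (sim_class e))"
    and "ess_vertex v \<Longrightarrow> quot_incidences ends (piece (sim_class e)) v = ess_degree_in (sim_class e) v"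
proof -
  have u: "ess_vertex u" "u \<in> verts (ess_chain e)" using bd boundary_sim_class boundary_ess_chain(1) by auto
  have w: "ess_vertex w" using bd boundary_sim_class by auto
  have deg: "degree (sim_class e) ends u = 1" "degree (sim_class e) ends w = 1"
    using degree_sim_class_ess_vertex(1) u w du dw by simp_all
  have "acyclic_mg (sim_class e) ends"
    unfolding acyclic_mg_def
  proof
    assume "\<exists>es vs. is_cycle (sim_class e) ends es vs"
    then obtain es vs where c: "is_cycle (sim_class e) ends es vs" by blast
    then have "u \<in> set vs"
      using u(2) is_cycle_ends_subset[OF c] is_cycle_sim_class[OF e c] by (auto simp: verts_def)
    then have "degree (set es) ends u \<ge> 2" using is_cycle_degree_ge_2[OF c] by blast
    moreover have "degree (set es) ends u \<le> degree (sim_class e) ends u"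
      using is_cycle_edges_subset[OF c] finite_subset[OF sim_class_subset[OF ess_edge_in_E[OF e]] finite_E]
      by (rule degree_mono)
    ultimately show False using deg by simp
  qed
  then have "is_tree ends (piece (sim_class e))"
    using sim_class_connected[OF ess_edge_in_E[OF e]] by (simp add: is_tree_def piece_simps)
  note fern = fern_tree_2[OF uw bd this, unfolded piece_simps, OF deg]
  then show "is_fern ends (piece (sim_class e))" by blast
  assume v: "ess_vertex v"
  have "ess_degree_in (sim_class e) v = (if v = u \<or> v = w then 1 else 0)"
    using degree_sim_class_ess_vertex(2)[OF v] degree_ess_chain_outside_boundary[OF v] bd du dw
    by (cases "v = u \<or> v = w") auto
  then show "quot_incidences ends (piece (sim_class e)) v = ess_degree_in (sim_class e) v"
    using fern by simp
qed

lemma sim_class_ess_chain: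
  shows "is_fern ends (piece (sim_class e))"
    and "ess_vertex v \<Longrightarrow> quot_incidences ends (piece (sim_class e)) v = ess_degree_in (sim_class e) v"
  by (cases rule: boundary_sim_class_cases;
      metis sim_class_without_boundary sim_class_one_boundary sim_class_two_boundary)+

end

end

section \<open>The fern decomposition\<close>

lemma reach_around_cycle:
  assumes k: "2 \<le> k" and step: "\<And>i. 0 < i \<Longrightarrow> i < k \<Longrightarrow> reach F ends (us ! i) (us ! ((i + 1) mod k))"
  shows "reach F ends (us ! 1) (us ! 0)"
proof -
  have "reach F ends (us ! 1) (us ! j)" if "1 \<le> j" "j < k" for j
    using that
  proof (induction j)
    case (Suc j)
    show ?case
    proof (cases "j = 0")
      case False
      then have r1: "reach F ends (us ! 1) (us ! j)" using Suc by simp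
      have "0 < j" "j < k" using False Suc.prems by simp_all
      then have r2: "reach F ends (us ! j) (us ! ((j + 1) mod k))" by (rule step)
      have "(j + 1) mod k = Suc j" using Suc.prems by simp
      then show ?thesis using reach_trans[OF r1 r2] by simp
    qed simp
  qed simp
  from this[of "k - 1"] have "reach F ends (us ! 1) (us ! (k - 1))" using k by simp
  moreover have "reach F ends (us ! (k - 1)) (us ! 0)" using k step[of "k - 1"] by simp
  ultimately show ?thesis by (rule reach_trans)
qed

context mgraph
begin

lemma sim_class_fern:
  assumes e0: "e0 \<in> E"
  shows "bdry (piece (sim_class e0)) = {v\<in>verts (sim_class e0). ess_vertex v}"
    and "is_fern ends (piece (sim_class e0))"
    and "ess_vertex v \<Longrightarrow> quot_incidences ends (piece (sim_class e0)) v = ess_degree_in (sim_class e0) v"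
proof -
  have "bdry (piece (sim_class e0)) = {v\<in>verts (sim_class e0). ess_vertex v} \<and> is_fern ends (piece (sim_class e0))
    \<and> (ess_vertex v \<longrightarrow> quot_incidences ends (piece (sim_class e0)) v = ess_degree_in (sim_class e0) v)"
  proof (cases "\<forall>f\<in>sim_class e0. \<not> ess_edge f")
    case True
    note P = sim_class_without_ess_edge[OF e0 True]
    show ?thesis using P(1,2) P(3)[of v] by simp
  next
    case False
    then obtain e where e: "e \<in> sim_class e0" "ess_edge e" by blast
    have C: "sim_class e0 = sim_class e" using sim_class_eq[OF e(1)] by simp
    show ?thesis
    proof (cases "\<exists>f\<in>ess_chain e. \<exists>w. ends f = {w} \<and> ess_vertex w")
      case True
      then obtain f w where f: "f \<in> ess_chain e" "ends f = {w}" "ess_vertex w" by blast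
      note L = sim_class_ess_loop[OF e(2) f]
      show ?thesis using L(1,2) L(3)[of v] C by simp
    next
      case False
      then have no_loop: "\<forall>f\<in>ess_chain e. \<forall>v. ends f = {v} \<longrightarrow> \<not> ess_vertex v" by blast
      note N = sim_class_ess_chain[OF e(2) no_loop]
      show ?thesis using boundary_sim_class[OF e(2) no_loop] N(1) N(2)[of v] C by simp
    qed
  qed
  then show "bdry (piece (sim_class e0)) = {v\<in>verts (sim_class e0). ess_vertex v}"
    and "is_fern ends (piece (sim_class e0))"
    and "ess_vertex v \<Longrightarrow> quot_incidences ends (piece (sim_class e0)) v = ess_degree_in (sim_class e0) v"
    by blast+
qed

definition isolated_pieces :: "('v, 'e) bmg set" where
  "isolated_pieces = {({v}, {}, {}) | v. v \<in> V \<and> (\<forall>e\<in>E. v \<notin> ends e)}"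

lemma induced_partition_eq:
  "induced_partition V E ends (sim_classes V E ends) = piece ` sim_class ` E \<union> isolated_pieces"
  unfolding induced_partition_def sim_classes_eq isolated_pieces_def by simp

lemma isolated_pieceD:
  "S \<in> isolated_pieces \<Longrightarrow> bdry S = {} \<and> bedges S = {} \<and> (\<exists>v. bverts S = {v} \<and> v \<in> V \<and> (\<forall>e\<in>E. v \<notin> ends e))"
  unfolding isolated_pieces_def by (auto simp: bdry_def bedges_def bverts_def)

lemma isolated_piece_fern: "S \<in> isolated_pieces \<Longrightarrow> is_fern ends S"
proof -
  assume "S \<in> isolated_pieces"
  then obtain v where v: "bverts S = {v}" "bedges S = {}" "bdry S = {}"
    by (auto simp: isolated_pieces_def bverts_def bedges_def bdry_def)
  have "connected_mg (bverts S) (bedges S) ends" using v by (simp add: connected_mg_def)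
  moreover have "acyclic_mg (bedges S) ends" using v by (auto simp: acyclic_mg_def is_cycle_def)
  ultimately show ?thesis using v by (simp add: is_fern_def is_tree_def)
qed

lemma pieces_fern: "\<forall>S\<in>induced_partition V E ends (sim_classes V E ends). is_fern ends S"
  unfolding induced_partition_eq using sim_class_fern(2) isolated_piece_fern by blast

lemma sim_class_eq_at_non_ess_vertex:
  assumes "x \<in> verts (sim_class e1)" "x \<in> verts (sim_class e2)" "\<not> ess_vertex x" "e1 \<in> E" "e2 \<in> E"
  shows "sim_class e1 = sim_class e2"
proof -
  obtain f1 where f1: "f1 \<in> sim_class e1" "x \<in> ends f1" using assms(1) unfolding verts_def by blast
  obtain f2 where f2: "f2 \<in> sim_class e2" "x \<in> ends f2" using assms(2) unfolding verts_def by blast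
  have "f1 \<in> E" "f2 \<in> E" using f1 f2 sim_class_subset assms by blast+
  then have "linked f1 f2" using linked_at_non_ess_vertex f1 f2 assms(3) by blast
  then have "f2 \<in> sim_class e1" using sim_class_linked f1 by blast
  then show ?thesis using sim_class_eq[OF f2(1)] by (simp add: sim_class_eq)
qed

lemma non_ess_vertex_unique_piece:
  assumes v: "v \<in> V" "\<not> ess_vertex v"
  shows "\<exists>!S. S \<in> induced_partition V E ends (sim_classes V E ends) \<and> v \<in> bverts S"
  unfolding induced_partition_eq
proof (cases "\<exists>e\<in>E. v \<in> ends e")
  case True
  then obtain e where e: "e \<in> E" "v \<in> ends e" by blast
  then have vin: "v \<in> verts (sim_class e)" using sim_class_self unfolding verts_def by blast
  show "\<exists>!S. S \<in> piece ` sim_class ` E \<union> isolated_pieces \<and> v \<in> bverts S"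
  proof (rule ex1I[of _ "piece (sim_class e)"])
    show "piece (sim_class e) \<in> piece ` sim_class ` E \<union> isolated_pieces \<and> v \<in> bverts (piece (sim_class e))"
      using e vin by (simp add: piece_simps)
    fix S assume S: "S \<in> piece ` sim_class ` E \<union> isolated_pieces \<and> v \<in> bverts S"
    show "S = piece (sim_class e)"
    proof (cases "S \<in> isolated_pieces")
      case True
      then show ?thesis using isolated_pieceD[OF True] S e by auto
    next
      case False
      then obtain e' where e': "e' \<in> E" "S = piece (sim_class e')" using S by blast
      then have "v \<in> verts (sim_class e')" using S by (simp add: piece_simps)
      then have "sim_class e' = sim_class e" using sim_class_eq_at_non_ess_vertex vin v(2) e' e by blast
      then show ?thesis using e' by simp
    qed
  qed
next
  case False
  let ?S0 = "({v}, {}, {}) :: ('v, 'e) bmg"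
  have S0: "?S0 \<in> isolated_pieces" using v False unfolding isolated_pieces_def by blast
  show "\<exists>!S. S \<in> piece ` sim_class ` E \<union> isolated_pieces \<and> v \<in> bverts S"
  proof (rule ex1I[of _ ?S0])
    show "?S0 \<in> piece ` sim_class ` E \<union> isolated_pieces \<and> v \<in> bverts ?S0" using S0 by (simp add: bverts_def)
    fix S assume S: "S \<in> piece ` sim_class ` E \<union> isolated_pieces \<and> v \<in> bverts S"
    show "S = ?S0"
    proof (cases "S \<in> isolated_pieces")
      case True
      then show ?thesis using S unfolding isolated_pieces_def by (auto simp: bverts_def)
    next
      case F: False
      then obtain e' where e': "e' \<in> E" "S = piece (sim_class e')" using S by blast
      then have "v \<in> verts (sim_class e')" using S by (simp add: piece_simps)
      then obtain f where "f \<in> sim_class e'" "v \<in> ends f" unfolding verts_def by blast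
      then show ?thesis using False sim_class_subset[OF e'(1)] by blast
    qed
  qed
qed

lemma union_boundaries:
  "\<Union>(bdry ` induced_partition V E ends (sim_classes V E ends)) = {v\<in>V. ess_vertex v}"
  unfolding induced_partition_eq
proof
  show "\<Union>(bdry ` (piece ` sim_class ` E \<union> isolated_pieces)) \<subseteq> {v\<in>V. ess_vertex v}"
  proof
    fix v assume "v \<in> \<Union>(bdry ` (piece ` sim_class ` E \<union> isolated_pieces))"
    then obtain S where S: "S \<in> piece ` sim_class ` E \<union> isolated_pieces" "v \<in> bdry S" by blast
    show "v \<in> {v\<in>V. ess_vertex v}"
    proof (cases "S \<in> isolated_pieces")
      case True then show ?thesis using S isolated_pieceD[OF True] by blast
    next
      case False
      then obtain e where e: "e \<in> E" "S = piece (sim_class e)" using S by blast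
      then show ?thesis using S sim_class_fern(1)[OF e(1)] ess_vertex_iff by auto
    qed
  qed
  show "{v\<in>V. ess_vertex v} \<subseteq> \<Union>(bdry ` (piece ` sim_class ` E \<union> isolated_pieces))"
  proof
    fix v assume v: "v \<in> {v\<in>V. ess_vertex v}"
    then obtain h where h: "h \<in> E" "v \<in> ends h" using ess_vertex_on_ess_edge on_ess_edge_def by blast
    then have "v \<in> verts (sim_class h)" using sim_class_self unfolding verts_def by blast
    then have "v \<in> bdry (piece (sim_class h))" using sim_class_fern(1)[OF h(1)] v by auto
    then show "v \<in> \<Union>(bdry ` (piece ` sim_class ` E \<union> isolated_pieces))" using h by blast
  qed
qed

lemma quot_edges_partition:
  "quot_edges ends (induced_partition V E ends (sim_classes V E ends)) = quot_edges ends (piece ` sim_class ` E)"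
proof -
  have "\<not> quot_edge ends S" if "S \<in> isolated_pieces" for S
    using isolated_pieceD[OF that] by (simp add: quot_edge_def)
  then show ?thesis unfolding quot_edges_eq induced_partition_eq by blast
qed

lemma sum_sim_classes: "(\<Sum>C\<in>sim_class ` E. card {f\<in>C. P f}) = card {f\<in>E. P f}"
proof -
  have U: "{f\<in>E. P f} = (\<Union>C\<in>sim_class ` E. {f\<in>C. P f})"
    using sim_class_self sim_class_subset by blast
  have fin: "\<forall>C\<in>sim_class ` E. finite {f\<in>C. P f}"
    using sim_class_subset finite_E by (auto intro: finite_subset)
  have disj: "\<forall>C\<in>sim_class ` E. \<forall>C'\<in>sim_class ` E. C \<noteq> C' \<longrightarrow> {f\<in>C. P f} \<inter> {f\<in>C'. P f} = {}"
    using sim_class_eq by blast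
  have "finite (sim_class ` E)" using finite_E by simp
  then show ?thesis unfolding U using card_UN_disjoint[OF _ fin disj] by simp
qed

lemma degree_quotient:
  assumes "ess_vertex v"
  shows "degree (quot_edges ends (piece ` sim_class ` E)) bdry v = ess_degree v"
proof -
  have inj: "inj_on piece (sim_class ` E)" by (rule inj_onI) (metis piece_simps(2))
  have "degree (quot_edges ends (piece ` sim_class ` E)) bdry v =
      (\<Sum>S\<in>piece ` sim_class ` E. quot_incidences ends S v)"
    using finite_E by (simp add: degree_quot_edges)
  also have "\<dots> = (\<Sum>C\<in>sim_class ` E. quot_incidences ends (piece C) v)"
    using sum.reindex[OF inj] by simp
  also have "\<dots> = (\<Sum>C\<in>sim_class ` E. ess_degree_in C v)"
    using sim_class_fern(3) assms by (intro sum.cong) auto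
  also have "\<dots> = ess_degree v"
    unfolding ess_degree_in_def ess_degree_def sum.distrib sum_sim_classes ..
  finally show ?thesis .
qed

lemma fvn_attained:
  obtains X where "X \<subseteq> V" "acyclic_mg {e\<in>E. ends e \<inter> X = {}} ends" "card X = fvn V E ends"
proof -
  let ?P = "{X. X \<subseteq> V \<and> acyclic_mg {e\<in>E. ends e \<inter> X = {}} ends}"
  have "ends e \<inter> V \<noteq> {}" if "e \<in> E" for e
    using ends_doubleton[OF that] ends_subset_V[OF that] by auto
  then have none: "{e\<in>E. ends e \<inter> V = {}} = {}" by blast
  have "acyclic_mg {e\<in>E. ends e \<inter> V = {}} ends" unfolding none by (auto simp: acyclic_mg_def is_cycle_def)
  then have "V \<in> ?P" by simp
  moreover have "finite ?P" using finite_V by (simp add: finite_subset[of _ "Pow V"] subset_eq)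
  ultimately have "Min (card ` ?P) \<in> card ` ?P" by (intro Min_in) auto
  then show thesis using that unfolding fvn_def by auto
qed

text \<open>A feedback vertex set of the quotient: every essential vertex is kept, every other vertex is
  replaced by an essential vertex of its class, if there is one.\<close>

definition anchor :: "'v \<Rightarrow> 'v" where
  "anchor x = (if ess_vertex x then x
     else (SOME b. ess_vertex b \<and> (\<exists>e\<in>E. x \<in> verts (sim_class e) \<and> b \<in> verts (sim_class e))))"

lemma quot_edge_avoids:
  assumes e0: "e0 \<in> E" and q: "quot_edge ends (piece (sim_class e0))"
    and disj: "bdry (piece (sim_class e0)) \<inter> anchor ` X = {}"
  shows "verts (sim_class e0) \<inter> X = {}"
proof (rule ccontr)
  let ?C = "sim_class e0"
  have bd: "bdry (piece ?C) = {v\<in>verts ?C. ess_vertex v}" using sim_class_fern(1)[OF e0] .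
  assume "verts ?C \<inter> X \<noteq> {}"
  then obtain x where x: "x \<in> verts ?C" "x \<in> X" by blast
  have "anchor x \<in> bdry (piece ?C)"
  proof (cases "ess_vertex x")
    case True
    then show ?thesis using bd x by (simp add: anchor_def)
  next
    case False
    have "bdry (piece ?C) \<noteq> {}" using q by (auto simp: quot_edge_def)
    then obtain b where "ess_vertex b" "b \<in> verts ?C" using bd by auto
    then have "\<exists>b. ess_vertex b \<and> (\<exists>e\<in>E. x \<in> verts (sim_class e) \<and> b \<in> verts (sim_class e))"
      using x e0 by blast
    then have "ess_vertex (anchor x) \<and> (\<exists>e\<in>E. x \<in> verts (sim_class e) \<and> anchor x \<in> verts (sim_class e))"
      unfolding anchor_def using False by (simp only: if_False) (rule someI_ex)
    then obtain e' where "e' \<in> E" "x \<in> verts (sim_class e')" "anchor x \<in> verts (sim_class e')"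
      "ess_vertex (anchor x)" by blast
    moreover have "sim_class e' = ?C" using sim_class_eq_at_non_ess_vertex calculation x(1) False e0 by blast
    ultimately show ?thesis using bd by auto
  qed
  then show False using disj x(2) by blast
qed


lemma tree_fern_pendant_edge:
  assumes C: "C \<subseteq> E" and tree: "is_tree ends (piece C)" and fern: "is_fern ends (piece C)"
    and bd: "bdry (piece C) = {u0, u1}" "u0 \<noteq> u1"
  obtains g y where "g \<in> C" "ends g = {u0, y}" "y \<noteq> u0" "reach (C - {g}) ends y u1"
proof -
  have finC: "finite C" using C finite_E finite_subset by blast
  have "degree C ends u0 = 1" using fern bd unfolding is_fern_def by (auto simp: piece_simps)
  then have deg: "card {f\<in>C. u0 \<in> ends f} + card {f\<in>C. ends f = {u0}} = 1" by (simp add: degree_def)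
  have "u0 \<in> verts C" using bd by (auto simp: piece_simps)
  then obtain g where g: "g \<in> C" "u0 \<in> ends g" unfolding verts_def by blast
  then have "card {f\<in>C. u0 \<in> ends f} \<noteq> 0" using finC by auto
  then have c: "card {f\<in>C. u0 \<in> ends f} = 1" "card {f\<in>C. ends f = {u0}} = 0" using deg by auto
  have only: "\<forall>f\<in>C. u0 \<in> ends f \<longrightarrow> f = g"
    using g c(1) card_le_Suc0_iff_eq[of "{f\<in>C. u0 \<in> ends f}"] finC by auto
  have "ends g \<noteq> {u0}" using g c(2) finC by auto
  moreover obtain a b where "ends g = {a, b}" using ends_doubleton C g(1) by blast
  ultimately obtain y where gy: "ends g = {u0, y}" "y \<noteq> u0" using g(2) by auto
  have "y \<in> verts C" "u1 \<in> verts C" using gy g(1) bd by (auto simp: verts_def piece_simps)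
  then have "reach C ends y u1" using tree by (auto simp: is_tree_def connected_mg_def piece_simps)
  then have "reach (C - {g}) ends y u1" using reach_Diff_pendant_edge only gy bd(2) by metis
  then show thesis using that g(1) gy by blast
qed

lemma quot_loop_lift:
  assumes "quot_edge ends (piece C)" "card (bdry (piece C)) = 1" "C \<subseteq> F"
  shows "\<exists>es vs. is_cycle F ends es vs"
proof -
  have "is_unicyclic ends (piece C)" using assms(1,2) by (auto simp: quot_edge_def)
  then have "cycle_edge_sets C ends \<noteq> {}" by (auto simp: is_unicyclic_def piece_simps)
  then obtain es vs where "is_cycle C ends es vs" unfolding cycle_edge_sets_def by blast
  then show ?thesis using assms(3) is_cycle_edges_subset is_cycle_mono by (metis subset_trans)
qed

text \<open>A cycle of length at least 2 in the quotient consists of tree ferns; removing the pendant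
  edge of the first one at its first boundary vertex leaves its two ends connected around the
  cycle.\<close>

lemma quot_path_lift:
  assumes c: "is_cycle QF bdry Ss us" and k: "2 \<le> length Ss"
    and QF: "\<forall>S\<in>QF. \<exists>e0\<in>E. S = piece (sim_class e0) \<and> sim_class e0 \<subseteq> F \<and> quot_edge ends S"
  shows "\<exists>es vs. is_cycle F ends es vs"
proof -
  define k where "k = length Ss"
  have cyc: "length us = k" "distinct Ss" "distinct us" "set Ss \<subseteq> QF"
    "\<And>i. i < k \<Longrightarrow> bdry (Ss ! i) = {us ! i, us ! ((i + 1) mod k)}"
    using c unfolding is_cycle_def k_def by auto
  have S: "\<exists>e0\<in>E. Ss ! i = piece (sim_class e0) \<and> sim_class e0 \<subseteq> F \<and> quot_edge ends (Ss ! i)"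
    if "i < k" for i
    using QF cyc(4) that k_def by (metis nth_mem subsetD)
  have ne: "us ! i \<noteq> us ! ((i + 1) mod k)" if "i < k" for i
    using is_cycle_adjacent_distinct[OF c k] that k_def by simp
  have tree: "is_tree ends (Ss ! i) \<and> is_fern ends (Ss ! i)" if "i < k" for i
    using S[OF that] cyc(5)[OF that] ne[OF that] by (auto simp: quot_edge_def)
  have "0 < k" using k k_def by linarith
  then obtain e0 where e0: "e0 \<in> E" "Ss ! 0 = piece (sim_class e0)" "sim_class e0 \<subseteq> F"
    using S by blast
  have bd0: "bdry (piece (sim_class e0)) = {us ! 0, us ! 1}"
    using cyc(5)[OF \<open>0 < k\<close>] e0(2) k k_def by simp
  have ne0: "us ! 0 \<noteq> us ! 1" using ne[OF \<open>0 < k\<close>] k k_def by simp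
  have "is_tree ends (piece (sim_class e0))" "is_fern ends (piece (sim_class e0))"
    using tree[OF \<open>0 < k\<close>] e0(2) by simp_all
  then obtain g y where g: "g \<in> sim_class e0" "ends g = {us ! 0, y}" "y \<noteq> us ! 0"
      "reach (sim_class e0 - {g}) ends y (us ! 1)"
    using tree_fern_pendant_edge[OF sim_class_subset[OF e0(1)] _ _ bd0 ne0] by blast
  have "sim_class e0 - {g} \<subseteq> F - {g}" using e0(3) by blast
  with g(4) have r1: "reach (F - {g}) ends y (us ! 1)" by (rule reach_mono)
  have around: "reach (F - {g}) ends (us ! i) (us ! ((i + 1) mod k))" if i: "0 < i" "i < k" for i
  proof -
    obtain ei where ei: "ei \<in> E" "Ss ! i = piece (sim_class ei)" "sim_class ei \<subseteq> F"
      using S[OF i(2)] by blast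
    have "Ss ! i \<noteq> Ss ! 0" using nth_eq_iff_index_eq[OF cyc(2), of i 0] i k_def \<open>0 < k\<close> by simp
    then have ne_class: "sim_class ei \<noteq> sim_class e0" using ei e0 by auto
    have "g \<notin> sim_class ei"
    proof
      assume "g \<in> sim_class ei"
      then show False using sim_class_eq[OF g(1)] sim_class_eq ne_class by metis
    qed
    then have sub: "sim_class ei \<subseteq> F - {g}" using ei(3) by blast
    have "us ! i \<in> verts (sim_class ei)" "us ! ((i + 1) mod k) \<in> verts (sim_class ei)"
      using cyc(5)[OF i(2)] ei(2) by (auto simp: piece_simps)
    then have "reach (sim_class ei) ends (us ! i) (us ! ((i + 1) mod k))"
      using tree[OF i(2)] ei(2) by (auto simp: is_tree_def connected_mg_def piece_simps)
    then show ?thesis using sub by (rule reach_mono)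
  qed
  have r2: "reach (F - {g}) ends (us ! 1) (us ! 0)"
    using reach_around_cycle[of k "F - {g}" ends us, OF _ around] k k_def by simp
  have "reach (F - {g}) ends (us ! 0) y" using reach_sym[OF reach_trans[OF r1 r2]] .
  moreover have "g \<in> F" using g(1) e0(3) by blast
  ultimately show ?thesis using reach_Diff_imp_cycle[of g F ends "us ! 0" y] g(2) by blast
qed

lemma fvn_quotient_le:
  "fvn {v\<in>V. ess_vertex v} (quot_edges ends (piece ` sim_class ` E)) bdry \<le> fvn V E ends"
proof -
  obtain X where X: "X \<subseteq> V" "acyclic_mg {e\<in>E. ends e \<inter> X = {}} ends" "card X = fvn V E ends"
    using fvn_attained by blast
  define F where "F = {e\<in>E. ends e \<inter> X = {}}"
  define X' where "X' = anchor ` X \<inter> {v\<in>V. ess_vertex v}"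
  let ?QF = "{S\<in>quot_edges ends (piece ` sim_class ` E). bdry S \<inter> X' = {}}"
  have QF: "\<exists>e0\<in>E. S = piece (sim_class e0) \<and> sim_class e0 \<subseteq> F \<and> quot_edge ends S"
    if S: "S \<in> ?QF" for S
  proof -
    obtain e0 where e0: "e0 \<in> E" "S = piece (sim_class e0)" "quot_edge ends S"
      using S by (auto simp: quot_edges_eq)
    have "bdry S \<subseteq> {v\<in>V. ess_vertex v}" using sim_class_fern(1)[OF e0(1)] e0(2) ess_vertex_iff by auto
    then have "bdry S \<inter> anchor ` X = {}" using S by (auto simp: X'_def)
    then have "verts (sim_class e0) \<inter> X = {}" using quot_edge_avoids e0 by blast
    then have "sim_class e0 \<subseteq> F" using sim_class_subset[OF e0(1)] by (auto simp: F_def verts_def)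
    then show ?thesis using e0 by blast
  qed
  have "acyclic_mg ?QF bdry"
    unfolding acyclic_mg_def
  proof
    assume "\<exists>Ss us. is_cycle ?QF bdry Ss us"
    then obtain Ss us where c: "is_cycle ?QF bdry Ss us" by blast
    have "\<exists>es vs. is_cycle F ends es vs"
    proof (cases "length Ss = 1")
      case True
      have "Ss ! 0 \<in> set Ss" using True by (cases Ss) auto
      moreover have "set Ss \<subseteq> ?QF" "bdry (Ss ! 0) = {us ! 0}" using c True by (auto simp: is_cycle_def)
      ultimately have "card (bdry (Ss ! 0)) = 1" "Ss ! 0 \<in> ?QF" by auto
      moreover obtain e0 where "e0 \<in> E" "Ss ! 0 = piece (sim_class e0)" "sim_class e0 \<subseteq> F"
        "quot_edge ends (Ss ! 0)" using QF calculation(2) by blast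
      ultimately show ?thesis using quot_loop_lift by metis
    next
      case False
      moreover have "length Ss \<noteq> 0" using c by (simp add: is_cycle_def)
      ultimately have "2 \<le> length Ss" by linarith
      then show ?thesis using quot_path_lift[OF c] QF by blast
    qed
    then show False using X(2) by (simp add: F_def acyclic_mg_def)
  qed
  then have "fvn {v\<in>V. ess_vertex v} (quot_edges ends (piece ` sim_class ` E)) bdry \<le> card X'"
    using finite_V by (intro fvn_le_card) (auto simp: X'_def)
  also have "card X' \<le> card (anchor ` X)"
    unfolding X'_def using X(1) finite_V by (intro card_mono) (auto intro: finite_subset)
  also have "\<dots> \<le> card X" using X(1) finite_V by (intro card_image_le) (auto intro: finite_subset)
  finally show ?thesis using X(3) by simp
qed

end

theorem lemma5p4:
  fixes V :: "'v set" and E :: "'e set" and ends :: "'e \<Rightarrow> 'v set"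
  assumes "multigraph V E ends"
  defines "HF \<equiv> induced_partition V E ends (sim_classes V E ends)"
  shows "(\<forall>S\<in>HF. is_fern ends S)
    \<and> (\<forall>v\<in>V. \<not> essential_vertex V E ends v \<longrightarrow> (\<exists>!S. S \<in> HF \<and> v \<in> bverts S))
    \<and> \<Union>(bdry ` HF) = {v\<in>V. essential_vertex V E ends v}
    \<and> fvn (quot_verts HF) (quot_edges ends HF) bdry \<le> fvn V E ends
    \<and> (\<forall>v\<in>quot_verts HF. degree (quot_edges ends HF) bdry v \<ge> 3)"
proof -
  interpret mgraph V E ends using assms(1) by (rule mgraph.intro)
  have verts: "quot_verts HF = {v\<in>V. essential_vertex V E ends v}"
    unfolding quot_verts_def HF_def by (rule union_boundaries)
  have edges: "quot_edges ends HF = quot_edges ends (piece ` sim_class ` E)"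
    unfolding HF_def by (rule quot_edges_partition)
  have "\<forall>v\<in>quot_verts HF. degree (quot_edges ends HF) bdry v \<ge> 3"
    unfolding verts edges using degree_quotient ess_vertex_iff by simp
  then show ?thesis
    using pieces_fern non_ess_vertex_unique_piece union_boundaries fvn_quotient_le
    unfolding HF_def verts[unfolded HF_def] edges[unfolded HF_def] by blast
qed

end
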